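(* Let $A,D\in\mathbb{B}(\mathcal{H})$ and $T=\begin{bmatrix}A&0\\0&D\end{bmatrix}\in\mathbb{B}(\mathcal{H}\oplus\mathcal{H})$. Let $f,g$ be non-negative continuous functions on $[0,\infty)$ with $f(t)g(t)=t$ for all $t\ge0$. Then for every non-negative, nondecreasing, convex function $h$ on $[0,\infty)$, \[ h(w(T))\le \frac12\max\left(\left\|h\big(f^2(|A|)\big)+h\big(g^2(|A|)\big)\right\|,\ \left\|h\big(f^2(|D|)\big)+h\big(g^2(|D|)\big)\right\|\right). \]
   Context: $\mathcal{H}$ is a complex Hilbert space; $w(X)=\sup\{|\langle Xx,x\rangle|:\|x\|=1\}$ is the numerical radius; $|X|=(X^*X)^{1/2}$; functions of positive operators are defined by continuous functional calculus, $f^2(|A|)=(f(|A|))^2$; $\|\cdot\|$ is the operator norm. *)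

theory Defs
  imports "HOL-Analysis.Analysis" "HOL-Computational_Algebra.Polynomial"
begin

text \<open>A complex Hilbert space: a Banach space (over the reals, as a real normed
  vector space) carrying a complex scalar multiplication compatible with the real one,
  and a complex inner product (linear in the first argument) inducing the norm.\<close>

class complex_hilbert = banach +
  fixes hscale :: "complex \<Rightarrow> 'a \<Rightarrow> 'a"
    and hinner :: "'a \<Rightarrow> 'a \<Rightarrow> complex"
  assumes hscale_add_right: "hscale c (x + y) = hscale c x + hscale c y"
    and hscale_add_left: "hscale (b + c) x = hscale b x + hscale c x"
    and hscale_mult: "hscale b (hscale c x) = hscale (b * c) x"
    and hscale_one: "hscale 1 x = x"
    and hscale_of_real: "hscale (complex_of_real r) x = scaleR r x"
    and hinner_cnj: "hinner x y = cnj (hinner y x)"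
    and hinner_add_left: "hinner (x + y) z = hinner x z + hinner y z"
    and hinner_scale_left: "hinner (hscale c x) y = c * hinner x y"
    and hinner_self_nonneg: "Im (hinner x x) = 0 \<and> Re (hinner x x) \<ge> 0"
    and hinner_self_eq_0: "hinner x x = 0 \<longleftrightarrow> x = 0"
    and norm_hinner: "norm x = sqrt (Re (hinner x x))"

text \<open>The Hilbert direct sum \<open>H \<oplus> H'\<close> (product type with the product norm of HOL-Analysis).\<close>

instantiation prod :: (complex_hilbert, complex_hilbert) complex_hilbert
begin

definition hscale_prod_def: "hscale c p = (hscale c (fst p), hscale c (snd p))"
definition hinner_prod_def: "hinner p q = hinner (fst p) (fst q) + hinner (snd p) (snd q)"

instance
proof
  fix x y z :: "'a \<times> 'b" and b c :: complex and r :: real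
  show "hscale c (x + y) = hscale c x + hscale c y"
    by (simp add: hscale_prod_def hscale_add_right)
  show "hscale (b + c) x = hscale b x + hscale c x"
    by (simp add: hscale_prod_def hscale_add_left)
  show "hscale b (hscale c x) = hscale (b * c) x"
    by (simp add: hscale_prod_def hscale_mult)
  show "hscale 1 x = x"
    by (simp add: hscale_prod_def hscale_one)
  show "hscale (complex_of_real r) x = scaleR r x"
    by (simp add: hscale_prod_def hscale_of_real scaleR_prod_def)
  show "hinner x y = cnj (hinner y x)"
    by (simp add: hinner_prod_def hinner_cnj[of "fst x"] hinner_cnj[of "snd x"])
  show "hinner (x + y) z = hinner x z + hinner y z"
    by (simp add: hinner_prod_def hinner_add_left)
  show "hinner (hscale c x) y = c * hinner x y"
    by (simp add: hinner_prod_def hscale_prod_def hinner_scale_left algebra_simps)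
  show "Im (hinner x x) = 0 \<and> Re (hinner x x) \<ge> 0"
    using hinner_self_nonneg[of "fst x"] hinner_self_nonneg[of "snd x"]
    by (simp add: hinner_prod_def)
  show "hinner x x = 0 \<longleftrightarrow> x = 0"
  proof
    assume h: "hinner x x = 0"
    have 1: "Re (hinner (fst x) (fst x)) = 0" "Re (hinner (snd x) (snd x)) = 0"
      using h hinner_self_nonneg[of "fst x"] hinner_self_nonneg[of "snd x"]
      by (auto simp: hinner_prod_def complex_eq_iff)
    then have "hinner (fst x) (fst x) = 0" "hinner (snd x) (snd x) = 0"
      using hinner_self_nonneg[of "fst x"] hinner_self_nonneg[of "snd x"]
      by (auto simp: complex_eq_iff)
    then show "x = 0" by (simp add: hinner_self_eq_0 prod_eq_iff)
  next
    assume "x = 0" then show "hinner x x = 0"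
      using hinner_self_eq_0[of "0::'a"] hinner_self_eq_0[of "0::'b"] by (simp add: hinner_prod_def)
  qed
  show "norm x = sqrt (Re (hinner x x))"
    using hinner_self_nonneg[of "fst x"] hinner_self_nonneg[of "snd x"]
    by (simp add: norm_prod_def hinner_prod_def norm_hinner)
qed

end

definition cblinear :: "('a::complex_hilbert \<Rightarrow> 'a) \<Rightarrow> bool" where
  "cblinear A \<longleftrightarrow> bounded_linear A \<and> (\<forall>c x. A (hscale c x) = hscale c (A x))"

definition adjoint :: "('a::complex_hilbert \<Rightarrow> 'a) \<Rightarrow> ('a \<Rightarrow> 'a)" where
  "adjoint A = (THE B. \<forall>x y. hinner (A x) y = hinner x (B y))"

definition positive_op :: "('a::complex_hilbert \<Rightarrow> 'a) \<Rightarrow> bool" where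
  "positive_op P \<longleftrightarrow> cblinear P \<and> (\<forall>x. Im (hinner (P x) x) = 0 \<and> Re (hinner (P x) x) \<ge> 0)"

definition abs_op :: "('a::complex_hilbert \<Rightarrow> 'a) \<Rightarrow> ('a \<Rightarrow> 'a)" where
  "abs_op A = (THE P. positive_op P \<and> P \<circ> P = adjoint A \<circ> A)"

definition poly_op :: "real poly \<Rightarrow> ('a::complex_hilbert \<Rightarrow> 'a) \<Rightarrow> ('a \<Rightarrow> 'a)" where
  "poly_op p P = (\<lambda>x. \<Sum>i\<le>degree p. scaleR (coeff p i) ((P ^^ i) x))"

text \<open>Continuous functional calculus of a positive operator \<open>P\<close> (spectrum contained in
  \<open>[0, \<parallel>P\<parallel>]\<close>): \<open>f(P)\<close> is the operator-norm limit of \<open>p_n(P)\<close> for any sequence of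
  polynomials \<open>p_n\<close> converging uniformly to \<open>f\<close> on \<open>[0, \<parallel>P\<parallel>]\<close>.\<close>

definition fcalc :: "(real \<Rightarrow> real) \<Rightarrow> ('a::complex_hilbert \<Rightarrow> 'a) \<Rightarrow> ('a \<Rightarrow> 'a)" where
  "fcalc f P = (THE X. cblinear X \<and>
     (\<forall>p :: nat \<Rightarrow> real poly.
        uniform_limit {0..onorm P} (\<lambda>n t. poly (p n) t) f sequentially \<longrightarrow>
        ((\<lambda>n. onorm (\<lambda>x. poly_op (p n) P x - X x)) \<longlonglongrightarrow> 0)))"

definition numrad :: "('a::complex_hilbert \<Rightarrow> 'a) \<Rightarrow> real" where
  "numrad X = (SUP x\<in>{x. norm x = 1}. cmod (hinner (X x) x))"

end

theory Submission
  imports Defs "HOL-Computational_Algebra.Fundamental_Theorem_Algebra"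
begin

text \<open>For a bounded operator \<open>X\<close>, the positive operator \<open>|X|\<close> has norm \<open>\<parallel>X\<parallel>\<close>, so it has an
  approximate eigenvector \<open>x\<^sub>n\<close> for the eigenvalue \<open>M = \<parallel>X\<parallel>\<close>; the continuous functional calculus
  carries it to an approximate eigenvector of \<open>h(f\<^sup>2(|X|)) + h(g\<^sup>2(|X|))\<close> for the eigenvalue
  \<open>h(f(M)\<^sup>2) + h(g(M)\<^sup>2)\<close>, which therefore bounds that operator's norm from below. Since
  \<open>M = f(M) g(M) \<le> (f(M)\<^sup>2 + g(M)\<^sup>2)/2\<close>, monotonicity and convexity of \<open>h\<close> give
  \<open>2 h(\<parallel>X\<parallel>) \<le> \<parallel>h(f\<^sup>2(|X|)) + h(g\<^sup>2(|X|))\<parallel>\<close>. Finally \<open>w(T) \<le> max \<parallel>A\<parallel> \<parallel>D\<parallel>\<close> and \<open>h\<close> is monotone.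

  The functional calculus is given only through polynomial approximation, so positivity of
  \<open>p(P)\<close> for polynomials \<open>p > 0\<close> on \<open>[0, \<parallel>P\<parallel>]\<close> is obtained from an explicit certificate: such
  \<open>p\<close> lies in the cone generated by \<open>s\<^sup>2\<close>, \<open>s\<^sup>2 X\<close> and \<open>s\<^sup>2 (\<parallel>P\<parallel> - X)\<close>. The identification of
  \<open>|X|\<close> with \<open>\<surd>(X\<^sup>*X)\<close> needs the adjoint, hence the Riesz representation theorem.\<close>

section \<open>Inner product spaces over \<open>\<complex>\<close>\<close>

lemma hinner_add_right: "hinner x (y + z) = hinner x y + hinner x z"
  by (metis hinner_cnj hinner_add_left complex_cnj_add)

lemma hinner_scale_right: "hinner x (hscale c y) = cnj c * hinner x y"
  by (metis hinner_cnj hinner_scale_left complex_cnj_mult)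

lemma hinner_zero_left [simp]: "hinner 0 y = 0"
  using hinner_add_left[of 0 0 y] by simp

lemma hinner_zero_right [simp]: "hinner x 0 = 0"
  using hinner_add_right[of x 0 0] by simp

lemma hinner_minus_left: "hinner (- x) y = - hinner x y"
  using hinner_add_left[of x "- x" y] by (simp add: eq_neg_iff_add_eq_0 add.commute)

lemma hinner_minus_right: "hinner x (- y) = - hinner x y"
  using hinner_add_right[of x y "- y"] by (simp add: eq_neg_iff_add_eq_0 add.commute)

lemma hinner_diff_left: "hinner (x - y) z = hinner x z - hinner y z"
  using hinner_add_left[of x "- y" z] by (simp add: hinner_minus_left)

lemma hinner_diff_right: "hinner x (y - z) = hinner x y - hinner x z"
  using hinner_add_right[of x y "- z"] by (simp add: hinner_minus_right)

lemma hinner_scaleR_left: "hinner (r *\<^sub>R x) y = of_real r * hinner x y"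
  by (metis hinner_scale_left hscale_of_real)

lemma hinner_scaleR_right: "hinner x (r *\<^sub>R y) = of_real r * hinner x y"
  by (metis hinner_scale_right hscale_of_real complex_cnj_complex_of_real)

lemma hinner_self: "hinner x x = complex_of_real ((norm x)\<^sup>2)"
  using hinner_self_nonneg[of x] by (simp add: norm_hinner complex_eq_iff)

lemma norm_sq_eq_hinner: "(norm x)\<^sup>2 = Re (hinner x x)"
  by (simp add: hinner_self)

lemma hinner_eqI: "(\<And>z. hinner z x = hinner z y) \<Longrightarrow> x = y"
  by (metis hinner_diff_right hinner_self_eq_0 right_minus_eq)

lemma hscale_scaleR_commute: "hscale c (r *\<^sub>R x) = r *\<^sub>R hscale c x"
  by (metis hscale_of_real hscale_mult mult.commute)

lemma norm_hscale: "norm (hscale c x) = cmod c * norm x"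
proof -
  have "hinner (hscale c x) (hscale c x) = c * cnj c * hinner x x"
    by (simp add: hinner_scale_left hinner_scale_right)
  then have "complex_of_real ((norm (hscale c x))\<^sup>2) = complex_of_real ((cmod c)\<^sup>2 * (norm x)\<^sup>2)"
    by (simp only: hinner_self complex_norm_square of_real_mult)
  then have "(norm (hscale c x))\<^sup>2 = (cmod c * norm x)\<^sup>2"
    unfolding of_real_eq_iff power_mult_distrib .
  then show ?thesis
    by (rule power2_eq_imp_eq) auto
qed

lemma cauchy_schwarz_Re: "Re (hinner x y) \<le> norm x * norm y"
proof (cases "x = 0 \<or> y = 0")
  case True then show ?thesis by auto
next
  case False
  then have nx: "norm x > 0" and ny: "norm y > 0" by auto
  define a where "a = (1 / norm x) *\<^sub>R x"
  define b where "b = (1 / norm y) *\<^sub>R y"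
  have "norm a = 1" "norm b = 1" using nx ny by (simp_all add: a_def b_def)
  then have "Re (hinner (a - b) (a - b)) = 2 - 2 * Re (hinner a b)"
    using hinner_cnj[of b a]
    unfolding hinner_diff_left hinner_diff_right by (simp add: hinner_self)
  moreover have "0 \<le> Re (hinner (a - b) (a - b))" using hinner_self_nonneg by auto
  moreover have "hinner a b = of_real (1 / (norm x * norm y)) * hinner x y"
    by (simp add: a_def b_def hinner_scaleR_left hinner_scaleR_right)
  ultimately have "Re (hinner x y) / (norm x * norm y) \<le> 1" by simp
  then show ?thesis using nx ny by (simp add: divide_le_eq)
qed

lemma cauchy_schwarz: "cmod (hinner x y) \<le> norm x * norm y"
proof (cases "hinner x y = 0")
  case True then show ?thesis by simp
next
  case False
  \<comment> \<open>rotate \<open>x\<close> by a unimodular \<open>u\<close> so that the inner product becomes real and nonnegative\<close>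
  define u where "u = cnj (hinner x y) / cmod (hinner x y)"
  have "hinner (hscale u x) y = cnj (hinner x y) * hinner x y / cmod (hinner x y)"
    by (simp add: u_def hinner_scale_left)
  also have "\<dots> = of_real (cmod (hinner x y))"
    using False by (simp add: complex_norm_square[symmetric] mult.commute power2_eq_square)
  finally have "hinner (hscale u x) y = of_real (cmod (hinner x y))" .
  then have "cmod (hinner x y) = Re (hinner (hscale u x) y)" by simp
  also have "\<dots> \<le> norm (hscale u x) * norm y" by (rule cauchy_schwarz_Re)
  also have "\<dots> = norm x * norm y" using False by (simp add: u_def norm_hscale norm_divide)
  finally show ?thesis .
qed

lemma bounded_linear_hscale: "bounded_linear (hscale c)"
  by (rule bounded_linear_intro[where K = "cmod c"])
    (simp_all add: hscale_add_right hscale_scaleR_commute norm_hscale)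

lemma bounded_linear_hinner_left: "bounded_linear (\<lambda>x. hinner x y)"
  by (rule bounded_linear_intro[where K = "norm y"])
    (simp_all add: hinner_add_left hinner_scaleR_left scaleR_conv_of_real cauchy_schwarz)

lemma bounded_linear_hinner_right: "bounded_linear (\<lambda>x. hinner y x)"
  by (rule bounded_linear_intro[where K = "norm y"])
    (simp_all add: hinner_add_right hinner_scaleR_right scaleR_conv_of_real,
      metis cauchy_schwarz mult.commute)

lemmas tendsto_hinner_left = bounded_linear.tendsto[OF bounded_linear_hinner_left]
lemmas tendsto_hinner_right = bounded_linear.tendsto[OF bounded_linear_hinner_right]
lemmas tendsto_hscale = bounded_linear.tendsto[OF bounded_linear_hscale]

lemma hinner_apply_le_onorm:
  assumes "bounded_linear P"
  shows "cmod (hinner (P x) x) \<le> onorm P * (norm x)\<^sup>2"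
proof -
  have "cmod (hinner (P x) x) \<le> norm (P x) * norm x" by (rule cauchy_schwarz)
  also have "\<dots> \<le> onorm P * norm x * norm x" by (simp add: mult_right_mono onorm[OF assms])
  finally show ?thesis by (simp add: power2_eq_square mult.assoc)
qed

section \<open>Positivity certificates for real polynomials on \<open>[0, M]\<close>\<close>

inductive_set sos_cone :: "real \<Rightarrow> real poly set" for M :: real where
  square: "s * s \<in> sos_cone M"
| square_X: "s * s * [:0, 1:] \<in> sos_cone M"
| square_M_minus_X: "s * s * [:M, -1:] \<in> sos_cone M"
| add: "p \<in> sos_cone M \<Longrightarrow> q \<in> sos_cone M \<Longrightarrow> p + q \<in> sos_cone M"

lemma poly_eqI_eval: "(\<And>x. poly p x = poly q x) \<Longrightarrow> p = (q :: real poly)"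
  by (metis poly_eq_poly_eq_iff ext)

lemma sos_cone_mult_square: "p \<in> sos_cone M \<Longrightarrow> r * r * p \<in> sos_cone M"
proof (induction rule: sos_cone.induct)
  case (square s)
  then show ?case using sos_cone.square[of "r * s"] by (simp only: mult_ac)
next
  case (square_X s)
  then show ?case using sos_cone.square_X[of "r * s"] by (simp only: mult_ac)
next
  case (square_M_minus_X s)
  then show ?case using sos_cone.square_M_minus_X[of "r * s"] by (simp only: mult_ac)
next
  case (add p q)
  then show ?case by (simp only: distrib_left sos_cone.add)
qed

lemma sos_cone_smult:
  assumes "c \<ge> 0" "p \<in> sos_cone M"
  shows "smult c p \<in> sos_cone M"
proof -
  have "smult c p = [:sqrt c:] * [:sqrt c:] * p"
    by (rule poly_eqI_eval) (use assms(1) in simp)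
  then show ?thesis using sos_cone_mult_square[OF assms(2)] by metis
qed

lemma sos_cone_const: "c \<ge> 0 \<Longrightarrow> [:c:] \<in> sos_cone M"
  using sos_cone.square[of "[:sqrt c:]" M] by simp

lemma sos_cone_mult_X:
  assumes M: "M > 0" and "p \<in> sos_cone M"
  shows "[:0, 1:] * p \<in> sos_cone M"
  using assms(2)
proof (induction rule: sos_cone.induct)
  case (square s)
  then show ?case using sos_cone.square_X[of s] by (simp only: mult_ac)
next
  case (square_X s)
  then show ?case using sos_cone.square[of "s * [:0, 1:]"] by (simp only: mult_ac)
next
  case (square_M_minus_X s)
  let ?X = "[:0, 1::real:]" and ?U = "[:M, -1:]"
  \<comment> \<open>\<open>M \<cdot> X (M - X) = X (M - X)\<^sup>2 + X\<^sup>2 (M - X)\<close>\<close>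
  have "?X * (s * s * ?U) = smult (1/M) ((s * ?U) * (s * ?U) * ?X + (s * ?X) * (s * ?X) * ?U)"
    by (rule poly_eqI_eval) (use M in \<open>simp add: field_simps\<close>)
  then show ?case
    using M by (simp only:) (intro sos_cone_smult sos_cone.add sos_cone.square_X
        sos_cone.square_M_minus_X, auto)
next
  case (add p q)
  then show ?case by (simp only: distrib_left sos_cone.add)
qed

lemma sos_cone_mult_M_minus_X:
  assumes M: "M > 0" and "p \<in> sos_cone M"
  shows "[:M, -1:] * p \<in> sos_cone M"
  using assms(2)
proof (induction rule: sos_cone.induct)
  case (square s)
  then show ?case using sos_cone.square_M_minus_X[of s] by (simp only: mult_ac)
next
  case (square_X s)
  let ?X = "[:0, 1::real:]" and ?U = "[:M, -1:]"
  have "?U * (s * s * ?X) = smult (1/M) ((s * ?U) * (s * ?U) * ?X + (s * ?X) * (s * ?X) * ?U)"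
    by (rule poly_eqI_eval) (use M in \<open>simp add: field_simps\<close>)
  then show ?case
    using M by (simp only:) (intro sos_cone_smult sos_cone.add sos_cone.square_X
        sos_cone.square_M_minus_X, auto)
next
  case (square_M_minus_X s)
  then show ?case using sos_cone.square[of "s * [:M, -1:]"] by (simp only: mult_ac)
next
  case (add p q)
  then show ?case by (simp only: distrib_left sos_cone.add)
qed

lemma sos_cone_mult_linear_increasing:
  assumes "M > 0" "c \<ge> 0" "p \<in> sos_cone M"
  shows "[:c, 1:] * p \<in> sos_cone M"
proof -
  have "[:c, 1:] * p = [:0, 1:] * p + smult c p"
    by (rule poly_eqI_eval) (simp add: algebra_simps)
  then show ?thesis using assms sos_cone_mult_X sos_cone_smult sos_cone.add by metis
qed

lemma sos_cone_mult_linear_decreasing: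
  assumes "M > 0" "c \<ge> M" "p \<in> sos_cone M"
  shows "[:c, -1:] * p \<in> sos_cone M"
proof -
  have "[:c, -1:] * p = [:M, -1:] * p + smult (c - M) p"
    by (rule poly_eqI_eval) (simp add: algebra_simps)
  then show ?thesis using assms sos_cone_mult_M_minus_X sos_cone_smult sos_cone.add
    by (metis diff_ge_0_iff_ge)
qed

lemma sos_cone_mult_quadratic:
  assumes "p \<in> sos_cone M"
  shows "[:a*a + b*b, -2*a, 1:] * p \<in> sos_cone M"
proof -
  have "[:a*a + b*b, -2*a, 1:] * p = [:-a, 1:] * [:-a, 1:] * p + smult (b*b) p"
    by (rule poly_eqI_eval) (simp add: algebra_simps)
  then show ?thesis using assms sos_cone_mult_square sos_cone_smult sos_cone.add
    by (metis zero_le_square)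
qed

lemma map_poly_of_real_add:
  "map_poly of_real (p + q) = (map_poly of_real p + map_poly of_real q :: 'a::real_algebra_1 poly)"
  by (rule poly_eqI) (simp add: coeff_map_poly)

lemma map_poly_of_real_mult:
  "map_poly of_real (p * q) = (map_poly of_real p * map_poly of_real q :: 'a::{real_algebra_1, comm_ring_1} poly)"
  by (rule poly_eqI) (simp add: coeff_map_poly coeff_mult)

lemma poly_map_poly_of_real:
  "poly (map_poly of_real p) (of_real x) = (of_real (poly p x) :: 'a::{real_algebra_1, comm_ring_1})"
  by (induction p) (simp_all add: map_poly_pCons)

lemma real_poly_linear_or_quadratic_factor:
  fixes q :: "real poly"
  assumes "degree q > 0"
  obtains (linear) r q' where "q = [:-r, 1:] * q'"
  | (quadratic) a b q' where "b \<noteq> 0" "q = [:a*a + b*b, -2*a, 1:] * q'"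
proof -
  let ?Q = "map_poly complex_of_real q"
  have "\<not> (\<exists>a l. a \<noteq> 0 \<and> l = 0 \<and> ?Q = pCons a l)"
    using assms degree_map_poly[of complex_of_real q] by auto
  then obtain z where z: "poly ?Q z = 0"
    using fundamental_theorem_of_algebra_alt by blast
  show thesis
  proof (cases "Im z = 0")
    case True
    then have "z = of_real (Re z)" by (simp add: complex_eq_iff)
    then have "poly q (Re z) = 0"
      using z poly_map_poly_of_real[of q "Re z"] by (metis of_real_eq_0_iff)
    then show thesis using linear by (metis dvdE poly_eq_0_iff_dvd)
  next
    case False
    define d where "d = [:Re z * Re z + Im z * Im z, -2 * Re z, 1:]"
    have "d \<noteq> 0" by (simp add: d_def)
    have d_root: "poly (map_poly complex_of_real d) z = 0"
      by (simp add: d_def map_poly_pCons complex_eq_iff power2_eq_square algebra_simps)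
    define r where "r = q mod d"
    have "degree r \<le> 1"
      using degree_mod_less[OF \<open>d \<noteq> 0\<close>, of q] by (cases "r = 0") (auto simp: r_def d_def)
    then have r_lin: "r = [:coeff r 0, coeff r 1:]"
      by (intro poly_eqI) (auto simp: coeff_pCons split: nat.split intro: coeff_eq_0)
    have "q = d * (q div d) + r" by (simp add: r_def)
    then have "poly ?Q z = poly (map_poly complex_of_real d) z * poly (map_poly of_real (q div d)) z
        + poly (map_poly complex_of_real r) z"
      by (metis map_poly_of_real_add map_poly_of_real_mult poly_add poly_mult)
    then have "poly (map_poly complex_of_real r) z = 0"
      using z d_root by simp
    then have "of_real (coeff r 0) + z * of_real (coeff r 1) = 0"
      by (subst (asm) r_lin) (simp add: map_poly_pCons)
    then have "r = 0" using False by (subst r_lin) (auto simp: complex_eq_iff)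
    with \<open>q = d * (q div d) + r\<close> have "q = d * (q div d)" by simp
    with False show thesis unfolding d_def by (rule quadratic)
  qed
qed

lemma poly_pos_on_interval_linear_factor:
  fixes q :: "real poly"
  assumes pos: "\<forall>t\<in>{0..M}. poly ([:-r, 1:] * q) t > 0"
  shows "r < 0 \<and> (\<forall>t\<in>{0..M}. poly q t > 0) \<or> r > M \<and> (\<forall>t\<in>{0..M}. poly (- q) t > 0)"
proof -
  have "r \<notin> {0..M}" using pos by fastforce
  then consider "r < 0" | "r > M" by fastforce
  then show ?thesis
  proof cases
    case 1
    have "poly q t > 0" if "t \<in> {0..M}" for t
    proof -
      have "poly ([:-r, 1:] * q) t = (t - r) * poly q t" by (simp add: algebra_simps)
      moreover have "t - r > 0" using that 1 by simp
      ultimately show ?thesis using pos that by (metis zero_less_mult_pos)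
    qed
    then show ?thesis using 1 by blast
  next
    case 2
    have "poly (- q) t > 0" if "t \<in> {0..M}" for t
    proof -
      have "poly ([:-r, 1:] * q) t = (r - t) * poly (- q) t" by (simp add: algebra_simps)
      moreover have "r - t > 0" using that 2 by simp
      ultimately show ?thesis using pos that by (metis zero_less_mult_pos)
    qed
    then show ?thesis using 2 by blast
  qed
qed

lemma poly_quadratic_pos: "b \<noteq> 0 \<Longrightarrow> poly [:a*a + b*b, -2*a, 1:] t > (0::real)"
  using sum_power2_gt_zero_iff[of "t - a" b] by (simp add: power2_eq_square algebra_simps)

lemma sos_cone_if_poly_pos:
  assumes M: "M > 0" and "\<forall>t\<in>{0..M}. poly q t > 0"
  shows "q \<in> sos_cone M"
  using assms(2)
proof (induction "degree q" arbitrary: q rule: less_induct)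
  case less
  note pos = less.prems
  have "q \<noteq> 0" using pos M by (metis atLeastAtMost_iff less_irrefl less_eq_real_def poly_0)
  show ?case
  proof (cases "degree q = 0")
    case True
    then obtain c where "q = [:c:]" by (metis degree_0_id)
    then show ?thesis using pos M sos_cone_const[of c M] by force
  next
    case False
    have IH: "q' \<in> sos_cone M" if "q = s * q'" "degree s > 0" "\<forall>t\<in>{0..M}. poly q' t > 0" for s q'
      using that \<open>q \<noteq> 0\<close> less by (simp add: degree_mult_eq)
    from False have "degree q > 0" by simp
    then show ?thesis
    proof (cases rule: real_poly_linear_or_quadratic_factor)
      case (linear r q')
      from poly_pos_on_interval_linear_factor[OF pos[unfolded linear]]
      show ?thesis
      proof (elim disjE conjE)
        assume "r < 0" "\<forall>t\<in>{0..M}. poly q' t > 0"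
        then show ?thesis
          unfolding linear using IH[OF linear] M sos_cone_mult_linear_increasing[of M "- r"] by simp
      next
        assume "r > M" "\<forall>t\<in>{0..M}. poly (- q') t > 0"
        have q: "q = [:r, -1:] * (- q')" using linear by simp
        have "- q' \<in> sos_cone M" by (rule IH[OF q]) (use \<open>\<forall>t\<in>{0..M}. poly (- q') t > 0\<close> in auto)
        then show ?thesis unfolding q using \<open>r > M\<close> M by (intro sos_cone_mult_linear_decreasing) auto
      qed
    next
      case (quadratic a b q')
      have "\<forall>t\<in>{0..M}. poly q' t > 0"
        using pos poly_quadratic_pos[OF quadratic(1)] unfolding quadratic(2) poly_mult
        by (metis zero_less_mult_pos)
      then have "q' \<in> sos_cone M" using IH[OF quadratic(2)] by simp
      then show ?thesis unfolding quadratic(2) by (rule sos_cone_mult_quadratic)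
    qed
  qed
qed

section \<open>Polynomials of an operator\<close>

lemma poly_op_eq_sum_atMost:
  "degree p \<le> n \<Longrightarrow> poly_op p P x = (\<Sum>i\<le>n. coeff p i *\<^sub>R (P ^^ i) x)"
  unfolding poly_op_def by (rule sum.mono_neutral_left) (auto simp: coeff_eq_0)

lemma poly_op_0 [simp]: "poly_op 0 P x = 0"
  by (simp add: poly_op_def)

lemma poly_op_const: "poly_op [:c:] P x = c *\<^sub>R x"
  by (simp add: poly_op_def)

lemma poly_op_pCons:
  assumes "bounded_linear P"
  shows "poly_op (pCons a p) P x = a *\<^sub>R x + P (poly_op p P x)"
proof -
  have "poly_op (pCons a p) P x = (\<Sum>i\<le>Suc (degree p). coeff (pCons a p) i *\<^sub>R (P ^^ i) x)"
    by (rule poly_op_eq_sum_atMost) (simp add: degree_pCons_le)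
  also have "\<dots> = a *\<^sub>R x + (\<Sum>i\<le>degree p. coeff p i *\<^sub>R (P ^^ Suc i) x)"
    by (subst sum.atMost_Suc_shift) simp
  also have "(\<Sum>i\<le>degree p. coeff p i *\<^sub>R (P ^^ Suc i) x) = P (poly_op p P x)"
    unfolding poly_op_def using bounded_linear.linear[OF assms]
    by (simp add: real_vector.linear_sum real_vector.linear_scale)
  finally show ?thesis .
qed

lemma poly_op_X:
  assumes "bounded_linear P"
  shows "poly_op [:0, 1:] P x = P x"
  using assms by (simp add: poly_op_pCons poly_op_const)

lemma poly_op_add:
  assumes "bounded_linear P"
  shows "poly_op (p + q) P x = poly_op p P x + poly_op q P x"
proof -
  let ?n = "max (degree p) (degree q)"
  have "poly_op (p + q) P x = (\<Sum>i\<le>?n. coeff (p + q) i *\<^sub>R (P ^^ i) x)"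
    by (rule poly_op_eq_sum_atMost) (simp add: degree_add_le)
  also have "\<dots> = (\<Sum>i\<le>?n. coeff p i *\<^sub>R (P ^^ i) x) + (\<Sum>i\<le>?n. coeff q i *\<^sub>R (P ^^ i) x)"
    by (simp add: scaleR_add_left sum.distrib)
  also have "\<dots> = poly_op p P x + poly_op q P x"
    using poly_op_eq_sum_atMost[of p ?n P x] poly_op_eq_sum_atMost[of q ?n P x] by simp
  finally show ?thesis .
qed

lemma poly_op_smult: "poly_op (smult c p) P x = c *\<^sub>R poly_op p P x"
proof -
  have "poly_op (smult c p) P x = (\<Sum>i\<le>degree p. coeff (smult c p) i *\<^sub>R (P ^^ i) x)"
    by (rule poly_op_eq_sum_atMost) (simp add: degree_smult_le)
  also have "\<dots> = c *\<^sub>R poly_op p P x"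
    by (simp add: poly_op_def scaleR_sum_right)
  finally show ?thesis .
qed

lemma poly_op_diff:
  assumes "bounded_linear P"
  shows "poly_op (p - q) P x = poly_op p P x - poly_op q P x"
  using poly_op_add[OF assms, of p "- q" x] poly_op_smult[of "- 1" q P x] by simp

lemma poly_op_mult:
  assumes "bounded_linear P"
  shows "poly_op (p * q) P x = poly_op p P (poly_op q P x)"
proof (induction p arbitrary: x)
  case 0 then show ?case by simp
next
  case (pCons a p)
  have "pCons a p * q = smult a q + pCons 0 (p * q)" by simp
  then show ?case
    using assms pCons.IH by (simp add: poly_op_add poly_op_smult poly_op_pCons)
qed

lemma bounded_linear_poly_op:
  assumes "bounded_linear P"
  shows "bounded_linear (poly_op p P)"
proof (induction p)
  case 0 then show ?case by (simp add: bounded_linear_zero[unfolded fun_eq_iff] poly_op_def)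
next
  case (pCons a p)
  have "poly_op (pCons a p) P = (\<lambda>x. a *\<^sub>R x + P (poly_op p P x))"
    using assms by (simp add: fun_eq_iff poly_op_pCons)
  moreover have "bounded_linear (\<lambda>x. a *\<^sub>R x + P (poly_op p P x))"
    by (intro bounded_linear_add bounded_linear_scaleR_right
        bounded_linear_compose[OF assms pCons.IH])
  ultimately show ?case by simp
qed

lemma poly_op_commute:
  assumes "bounded_linear P" "bounded_linear R" "\<And>x. R (P x) = P (R x)"
  shows "R (poly_op p P x) = poly_op p P (R x)"
proof (induction p arbitrary: x)
  case 0 then show ?case using assms(2) by (simp add: linear_simps)
next
  case (pCons a p)
  then show ?case using assms by (simp add: poly_op_pCons linear_simps)
qed

lemma cblinear_poly_op:
  assumes "cblinear P"
  shows "cblinear (poly_op p P)"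
proof -
  have "bounded_linear P" using assms by (simp add: cblinear_def)
  moreover have "poly_op p P (hscale c x) = hscale c (poly_op p P x)" for c x
    using poly_op_commute[OF calculation bounded_linear_hscale] assms
    by (simp add: cblinear_def)
  ultimately show ?thesis by (simp add: cblinear_def bounded_linear_poly_op)
qed

section \<open>Hermitian and positive operators\<close>

definition hermitian :: "('a::complex_hilbert \<Rightarrow> 'a) \<Rightarrow> bool" where
  "hermitian S \<longleftrightarrow> (\<forall>x y. hinner (S x) y = hinner x (S y))"

definition positive_form :: "('a::complex_hilbert \<Rightarrow> 'a) \<Rightarrow> bool" where
  "positive_form S \<longleftrightarrow> (\<forall>x. Im (hinner (S x) x) = 0 \<and> Re (hinner (S x) x) \<ge> 0)"

lemma positive_op_iff: "positive_op P \<longleftrightarrow> cblinear P \<and> positive_form P"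
  by (simp add: positive_op_def positive_form_def)

lemma hermitian_poly_op:
  assumes bl: "bounded_linear P" and "hermitian P"
  shows "hermitian (poly_op p P)"
  unfolding hermitian_def
proof (induction p)
  case 0 then show ?case by simp
next
  case (pCons a p)
  show ?case
  proof (intro allI)
    fix x y
    have "hinner (poly_op (pCons a p) P x) y = of_real a * hinner x y + hinner (P (poly_op p P x)) y"
      using bl by (simp add: poly_op_pCons hinner_add_left hinner_scaleR_left)
    also have "hinner (P (poly_op p P x)) y = hinner x (poly_op p P (P y))"
      using assms(2) pCons by (simp add: hermitian_def)
    also have "poly_op p P (P y) = P (poly_op p P y)"
      using poly_op_commute[OF bl bl] by simp
    finally show "hinner (poly_op (pCons a p) P x) y = hinner x (poly_op (pCons a p) P y)"
      using bl by (simp add: poly_op_pCons hinner_add_right hinner_scaleR_right)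
  qed
qed

lemma hermitian_if_positive_form:
  assumes P: "cblinear P" and pos: "positive_form P"
  shows "hermitian P"
  unfolding hermitian_def
proof (intro allI)
  fix x y
  have bl: "bounded_linear P" using P by (simp add: cblinear_def)
  have im: "\<And>v. Im (hinner (P v) v) = 0" using pos by (simp add: positive_form_def)
  \<comment> \<open>polarization: the forms at \<open>x + y\<close> and \<open>x + i y\<close> are real\<close>
  have e1: "hinner (P (x + y)) (x + y) =
      hinner (P x) x + hinner (P x) y + hinner (P y) x + hinner (P y) y"
    using bl by (simp add: linear_simps hinner_add_left hinner_add_right)
  have e2: "hinner (P (x + hscale \<i> y)) (x + hscale \<i> y) =
      hinner (P x) x - \<i> * hinner (P x) y + \<i> * hinner (P y) x + hinner (P y) y"
    using bl P
    by (simp add: linear_simps hinner_add_left hinner_add_right cblinear_def hinner_scale_left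
        hinner_scale_right algebra_simps)
  have "Im (hinner (P x) y) + Im (hinner (P y) x) = 0"
    using im[of "x + y"] im[of x] im[of y] e1 by simp
  moreover have "Re (hinner (P y) x) = Re (hinner (P x) y)"
    using im[of "x + hscale \<i> y"] im[of x] im[of y] e2 by simp
  ultimately have "hinner (P y) x = cnj (hinner (P x) y)" by (simp add: complex_eq_iff)
  then show "hinner (P y) x = hinner y (P x)" by (metis hinner_cnj)
qed

lemma positive_form_onorm_minus:
  assumes "bounded_linear P" "positive_form P"
  shows "positive_form (\<lambda>x. onorm P *\<^sub>R x - P x)"
  unfolding positive_form_def
proof (intro allI conjI)
  fix x
  have e: "hinner (onorm P *\<^sub>R x - P x) x = of_real (onorm P * (norm x)\<^sup>2) - hinner (P x) x"
    by (simp add: hinner_diff_left hinner_scaleR_left hinner_self)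
  show "Im (hinner (onorm P *\<^sub>R x - P x) x) = 0" using assms(2) e by (simp add: positive_form_def)
  have "Re (hinner (P x) x) \<le> onorm P * (norm x)\<^sup>2"
    using complex_Re_le_cmod hinner_apply_le_onorm[OF assms(1)] order_trans by blast
  then show "Re (hinner (onorm P *\<^sub>R x - P x) x) \<ge> 0" using e by simp
qed

lemma positive_form_poly_op_sos:
  assumes P: "cblinear P" and pos: "positive_form P" and q: "q \<in> sos_cone (onorm P)"
  shows "positive_form (poly_op q P)"
  using q
proof (induction rule: sos_cone.induct)
  have bl: "bounded_linear P" using P by (simp add: cblinear_def)
  \<comment> \<open>\<open>\<langle>(s\<^sup>2 r)(P) x, x\<rangle> = \<langle>r(P) s(P) x, s(P) x\<rangle>\<close>, so it suffices that \<open>r(P)\<close> is positive\<close>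
  have sandwich: "positive_form (poly_op (s * s * r) P)" if "positive_form (poly_op r P)" for s r
  proof -
    have herm: "hinner (poly_op s P x) y = hinner x (poly_op s P y)" for x y
      using hermitian_poly_op[OF bl hermitian_if_positive_form[OF P pos]] by (simp add: hermitian_def)
    have "s * s * r = s * (r * s)" by (simp only: mult_ac)
    then have "hinner (poly_op (s * s * r) P x) x
        = hinner (poly_op r P (poly_op s P x)) (poly_op s P x)" for x
      by (simp only: poly_op_mult[OF bl] herm)
    then show ?thesis using that by (simp add: positive_form_def)
  qed
  {
    case (square s)
    have "poly_op 1 P x = x" for x using poly_op_const[of 1 P x] by (simp add: pCons_one)
    then have "positive_form (poly_op 1 P)"
      by (simp add: positive_form_def hinner_self)
    then show ?case using sandwich[of 1 s] by simp
  next
    case (square_X s)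
    have "poly_op [:0, 1:] P = P" using bl by (simp add: fun_eq_iff poly_op_X)
    then show ?case using sandwich pos by metis
  next
    case (square_M_minus_X s)
    have "poly_op [:onorm P, -1:] P = (\<lambda>y. onorm P *\<^sub>R y - P y)"
      using bl by (simp add: fun_eq_iff poly_op_pCons poly_op_const linear_simps)
    then show ?case using sandwich positive_form_onorm_minus[OF bl pos] by metis
  next
    case (add p q)
    then show ?case by (simp add: positive_form_def poly_op_add[OF bl] hinner_add_left)
  }
qed

lemma positive_form_poly_op:
  assumes P: "cblinear P" and pos: "positive_form P" and q: "\<forall>t\<in>{0..onorm P}. poly q t > 0"
  shows "positive_form (poly_op q P)"
proof (cases "onorm P = 0")
  case True
  have bl: "bounded_linear P" using P by (simp add: cblinear_def)
  then have "P = (\<lambda>x. 0)" using True onorm_eq_0 by blast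
  then have "poly_op q P x = poly q 0 *\<^sub>R x" for x
    using bl by (cases q) (simp add: poly_op_pCons)
  moreover have "poly q 0 > 0" using q True by auto
  ultimately show ?thesis by (simp add: positive_form_def hinner_scaleR_left hinner_self)
next
  case False
  then have "onorm P > 0" using onorm_pos_le[of P] P by (simp add: cblinear_def)
  then show ?thesis using positive_form_poly_op_sos[OF P pos] sos_cone_if_poly_pos q by blast
qed

lemma onorm_poly_op_le:
  assumes P: "cblinear P" and pos: "positive_form P" and c: "\<forall>t\<in>{0..onorm P}. \<bar>poly p t\<bar> \<le> c"
  shows "onorm (poly_op p P) \<le> c"
proof (rule onorm_bound)
  have bl: "bounded_linear P" using P by (simp add: cblinear_def)
  have "0 \<in> {0..onorm P}" using onorm_pos_le[OF bl] by simp
  then show c0: "0 \<le> c" using c by fastforce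
  fix x
  show "norm (poly_op p P x) \<le> c * norm x"
  proof (rule field_le_epsilon)
    fix e :: real assume e: "e > 0"
    define d where "d = e / (norm x + 1)"
    have d: "d > 0" using e by (simp add: d_def add_nonneg_pos)
    \<comment> \<open>positivity of \<open>(c + d)\<^sup>2 - p\<^sup>2\<close> on \<open>[0, \<parallel>P\<parallel>]\<close>\<close>
    let ?q = "[:(c + d)\<^sup>2:] - p * p"
    have "\<forall>t\<in>{0..onorm P}. poly ?q t > 0"
    proof
      fix t assume t: "t \<in> {0..onorm P}"
      have "\<bar>poly p t\<bar> < c + d" using c t d by fastforce
      then have "\<bar>poly p t\<bar>\<^sup>2 < (c + d)\<^sup>2" by (rule power_strict_mono) auto
      then show "poly ?q t > 0" by (simp add: power2_eq_square)
    qed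
    then have "Re (hinner (poly_op ?q P x) x) \<ge> 0"
      using positive_form_poly_op[OF P pos] by (simp add: positive_form_def)
    moreover have "poly_op ?q P x = (c + d)\<^sup>2 *\<^sub>R x - poly_op p P (poly_op p P x)"
      using bl by (simp add: poly_op_diff poly_op_const poly_op_mult)
    moreover have "hinner (poly_op p P (poly_op p P x)) x = hinner (poly_op p P x) (poly_op p P x)"
      using hermitian_poly_op[OF bl hermitian_if_positive_form[OF P pos]] by (simp add: hermitian_def)
    ultimately have "(norm (poly_op p P x))\<^sup>2 \<le> ((c + d) * norm x)\<^sup>2"
      by (simp add: hinner_diff_left hinner_scaleR_left hinner_self power_mult_distrib)
    then have "norm (poly_op p P x) \<le> c * norm x + d * norm x"
      using c0 d by (simp add: power2_le_iff_abs_le distrib_right)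
    also have "d * norm x \<le> e"
      using e by (simp add: d_def divide_le_eq add_nonneg_pos mult.commute)
    finally show "norm (poly_op p P x) \<le> c * norm x + e" by simp
  qed
qed

lemma norm_apply_sq_le:
  assumes P: "cblinear P" and pos: "positive_form P"
  shows "(norm (P x))\<^sup>2 \<le> onorm P * Re (hinner (P x) x)"
proof (rule field_le_epsilon)
  fix e :: real assume e: "e > 0"
  have bl: "bounded_linear P" using P by (simp add: cblinear_def)
  define d where "d = e / ((norm x)\<^sup>2 + 1)"
  have d: "d > 0" using e by (simp add: d_def add_nonneg_pos)
  \<comment> \<open>positivity of \<open>d + X (\<parallel>P\<parallel> - X)\<close>\<close>
  let ?q = "[:d, onorm P, -1:]"
  have "\<forall>t\<in>{0..onorm P}. poly ?q t > 0"
  proof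
    fix t assume "t \<in> {0..onorm P}"
    then have "t * (onorm P - t) \<ge> 0" by simp
    then show "poly ?q t > 0" using d by (simp add: algebra_simps)
  qed
  then have "Re (hinner (poly_op ?q P x) x) \<ge> 0"
    using positive_form_poly_op[OF P pos] by (simp add: positive_form_def)
  moreover have "poly_op ?q P x = d *\<^sub>R x + onorm P *\<^sub>R P x - P (P x)"
    using bl by (simp add: poly_op_pCons linear_simps algebra_simps)
  moreover have "hinner (P (P x)) x = hinner (P x) (P x)"
    using hermitian_if_positive_form[OF P pos] by (simp add: hermitian_def)
  ultimately have "(norm (P x))\<^sup>2 \<le> onorm P * Re (hinner (P x) x) + e * ((norm x)\<^sup>2 / ((norm x)\<^sup>2 + 1))"
    by (simp add: d_def hinner_diff_left hinner_add_left hinner_scaleR_left hinner_self)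
  also have "e * ((norm x)\<^sup>2 / ((norm x)\<^sup>2 + 1)) \<le> e * 1"
    using e by (intro mult_left_mono) (auto simp: divide_le_eq_1 add_nonneg_pos)
  finally show "(norm (P x))\<^sup>2 \<le> onorm P * Re (hinner (P x) x) + e" by simp
qed

lemma positive_form_kernel:
  assumes "cblinear P" "positive_form P" "Re (hinner (P y) y) = 0"
  shows "P y = 0"
  using norm_apply_sq_le[OF assms(1,2), of y] assms(3) by simp

section \<open>Convergence of operators\<close>

definition op_dist :: "('a::real_normed_vector \<Rightarrow> 'b::real_normed_vector) \<Rightarrow> ('a \<Rightarrow> 'b) \<Rightarrow> real" where
  "op_dist F G = onorm (\<lambda>x. F x - G x)"

lemma op_dist_nonneg: "bounded_linear F \<Longrightarrow> bounded_linear G \<Longrightarrow> op_dist F G \<ge> 0"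
  unfolding op_dist_def by (intro onorm_pos_le bounded_linear_sub)

lemma op_dist_triangle:
  assumes "bounded_linear F" "bounded_linear G" "bounded_linear H"
  shows "op_dist F H \<le> op_dist F G + op_dist G H"
  using onorm_triangle[OF bounded_linear_sub[OF assms(1,2)] bounded_linear_sub[OF assms(2,3)]]
  by (simp add: op_dist_def)

lemma op_dist_commute: "op_dist F G = op_dist G F"
  using onorm_neg[of "\<lambda>x. F x - G x"] by (simp add: op_dist_def)

lemma norm_diff_le_op_dist:
  assumes "bounded_linear F" "bounded_linear G"
  shows "norm (F x - G x) \<le> op_dist F G * norm x"
  unfolding op_dist_def using onorm[OF bounded_linear_sub[OF assms]] by simp

lemma op_dist_eq_0_imp_eq:
  assumes "bounded_linear F" "bounded_linear G" "op_dist F G = 0"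
  shows "F = G"
  using onorm_eq_0[OF bounded_linear_sub[OF assms(1,2)]] assms(3) by (auto simp: op_dist_def)

lemma op_dist_limit_unique:
  assumes F: "\<And>n. bounded_linear (F n)" and X: "bounded_linear X" and Y: "bounded_linear Y"
    and "(\<lambda>n. op_dist (F n) X) \<longlonglongrightarrow> 0" "(\<lambda>n. op_dist (F n) Y) \<longlonglongrightarrow> 0"
  shows "X = Y"
proof (rule op_dist_eq_0_imp_eq[OF X Y])
  have lim: "(\<lambda>n. op_dist (F n) X + op_dist (F n) Y) \<longlonglongrightarrow> 0 + 0"
    by (intro tendsto_add assms)
  have "op_dist X Y \<le> 0 + 0"
    by (rule tendsto_le[OF sequentially_bot lim tendsto_const])
      (use op_dist_triangle[OF X F Y] op_dist_commute[of X] in simp)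
  then show "op_dist X Y = 0" using op_dist_nonneg[OF X Y] by simp
qed

lemma op_dist_Cauchy_convergent:
  fixes F :: "nat \<Rightarrow> 'a::real_normed_vector \<Rightarrow> 'b::banach"
  assumes bl: "\<And>n. bounded_linear (F n)"
    and C: "\<And>e. e > 0 \<Longrightarrow> \<exists>N. \<forall>m\<ge>N. \<forall>n\<ge>N. op_dist (F m) (F n) < e"
  obtains X where "bounded_linear X" "(\<lambda>n. op_dist (F n) X) \<longlonglongrightarrow> 0"
proof -
  define B where "B n = Blinfun (F n)" for n
  have norm_B: "norm (B n - L) = op_dist (F n) (blinfun_apply L)" for n L
    using bl by (simp add: B_def bounded_linear_Blinfun_apply norm_blinfun.rep_eq
        minus_blinfun.rep_eq op_dist_def)
  have "Cauchy B"
    unfolding Cauchy_def dist_norm using C bl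
    by (simp add: B_def bounded_linear_Blinfun_apply norm_blinfun.rep_eq minus_blinfun.rep_eq op_dist_def)
  then obtain L where "B \<longlonglongrightarrow> L" using Cauchy_convergent_iff convergent_def by blast
  then have "(\<lambda>n. op_dist (F n) (blinfun_apply L)) \<longlonglongrightarrow> 0"
    by (simp add: tendsto_norm_zero_iff LIM_zero_iff flip: norm_B)
  then show thesis using that blinfun.bounded_linear_right by blast
qed

lemma tendsto_apply_if_op_dist:
  assumes "\<And>n. bounded_linear (F n)" "bounded_linear X" "(\<lambda>n. op_dist (F n) X) \<longlonglongrightarrow> 0"
  shows "(\<lambda>n. F n x) \<longlonglongrightarrow> X x"
proof -
  have "\<forall>n. norm (F n x - X x) \<le> op_dist (F n) X * norm x"
    by (simp add: norm_diff_le_op_dist[OF assms(1,2)])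
  from Lim_null_comparison[OF always_eventually[OF this] tendsto_mult_left_zero[OF assms(3)]]
  have "(\<lambda>n. F n x - X x) \<longlonglongrightarrow> 0" .
  then show ?thesis by (simp add: LIM_zero_iff)
qed

lemma tendsto_apply_twice_if_op_dist:
  assumes F: "\<And>n. bounded_linear (F n)" and X: "bounded_linear X"
    and lim: "(\<lambda>n. op_dist (F n) X) \<longlonglongrightarrow> 0"
  shows "(\<lambda>n. F n (F n x)) \<longlonglongrightarrow> X (X x)"
proof -
  have a: "(\<lambda>n. F n (X x) - X (X x)) \<longlonglongrightarrow> 0"
    using tendsto_apply_if_op_dist[OF F X lim, of "X x"] by (simp add: LIM_zero)
  have v: "(\<lambda>n. norm (F n x - X x)) \<longlonglongrightarrow> 0"
    using tendsto_apply_if_op_dist[OF F X lim, of x] by (simp add: tendsto_norm_zero_iff LIM_zero)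
  have "(\<lambda>n. (op_dist (F n) X + onorm X) * norm (F n x - X x)) \<longlonglongrightarrow> (0 + onorm X) * 0"
    by (intro tendsto_mult tendsto_add lim tendsto_const v)
  then have g: "(\<lambda>n. (op_dist (F n) X + onorm X) * norm (F n x - X x)) \<longlonglongrightarrow> 0" by simp
  have bound: "norm (F n v) \<le> (op_dist (F n) X + onorm X) * norm v" for n v
  proof -
    have "norm (F n v) \<le> norm (F n v - X v) + norm (X v)"
      using norm_triangle_ineq[of "F n v - X v" "X v"] by simp
    also have "\<dots> \<le> op_dist (F n) X * norm v + onorm X * norm v"
      by (intro add_mono norm_diff_le_op_dist F X onorm X)
    finally show ?thesis by (simp add: algebra_simps)
  qed
  have b: "(\<lambda>n. F n (F n x - X x)) \<longlonglongrightarrow> 0"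
    using bound by (intro Lim_null_comparison[OF always_eventually g]) simp
  have "(\<lambda>n. F n (F n x - X x) + (F n (X x) - X (X x))) \<longlonglongrightarrow> 0 + 0"
    by (intro tendsto_add a b)
  then show ?thesis using F by (simp add: linear_simps LIM_zero_iff)
qed

section \<open>The continuous functional calculus\<close>

abbreviation poly_approx :: "real \<Rightarrow> (nat \<Rightarrow> real poly) \<Rightarrow> (real \<Rightarrow> real) \<Rightarrow> bool" where
  "poly_approx M p f \<equiv> uniform_limit {0..M} (\<lambda>n t. poly (p n) t) f sequentially"

lemma real_polynomial_function_eq_poly:
  "real_polynomial_function g \<Longrightarrow> \<exists>p. \<forall>x. g x = poly p x"
proof (induction rule: real_polynomial_function.induct)
  case (linear f)
  have "f x = poly [:0, f 1:] x" for x
    using linear_simps(5)[OF linear, of x 1] by simp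
  then show ?case by blast
next
  case (const c)
  then show ?case by (intro exI[of _ "[:c:]"]) simp
next
  case (add f g)
  then obtain p q where "\<forall>x. f x = poly p x" "\<forall>x. g x = poly q x" by blast
  then show ?case by (intro exI[of _ "p + q"]) simp
next
  case (mult f g)
  then obtain p q where "\<forall>x. f x = poly p x" "\<forall>x. g x = poly q x" by blast
  then show ?case by (intro exI[of _ "p * q"]) simp
qed

lemma poly_approx_exists:
  assumes "continuous_on {0..M} f"
  shows "\<exists>p. poly_approx M p f"
proof -
  have "\<exists>q. \<forall>t\<in>{0..M}. \<bar>f t - poly q t\<bar> < 1 / Suc n" for n :: nat
  proof -
    obtain g where g: "real_polynomial_function g" "\<And>x. x \<in> {0..M} \<Longrightarrow> \<bar>f x - g x\<bar> < 1 / Suc n"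
      using Stone_Weierstrass_real_polynomial_function[OF compact_Icc assms, of "1 / Suc n"] by auto
    obtain q where "\<forall>x. g x = poly q x" using real_polynomial_function_eq_poly[OF g(1)] by blast
    then show ?thesis using g(2) by (intro exI[of _ q]) auto
  qed
  then obtain p where p: "\<And>n. \<forall>t\<in>{0..M}. \<bar>f t - poly (p n) t\<bar> < 1 / Suc n" by metis
  have "poly_approx M p f"
    unfolding uniform_limit_iff
  proof (intro allI impI)
    fix e :: real assume e: "e > 0"
    obtain N :: nat where N: "1 / Suc N < e" using e by (metis nat_approx_posE)
    show "\<forall>\<^sub>F n in sequentially. \<forall>t\<in>{0..M}. dist (poly (p n) t) (f t) < e"
    proof (rule eventually_sequentiallyI[of N])
      fix n assume "n \<ge> N"
      then have "1 / real (Suc n) \<le> 1 / Suc N" by (simp add: frac_le)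
      then show "\<forall>t\<in>{0..M}. dist (poly (p n) t) (f t) < e"
        using p[of n] N by (auto simp: dist_real_def abs_minus_commute)
    qed
  qed
  then show ?thesis by blast
qed

lemma op_dist_poly_op_le:
  assumes P: "cblinear P" "positive_form P"
    and p: "\<forall>t\<in>{0..onorm P}. dist (poly p t) (f t) < e"
    and q: "\<forall>t\<in>{0..onorm P}. dist (poly q t) (f t) < e"
  shows "op_dist (poly_op p P) (poly_op q P) \<le> 2 * e"
proof -
  have bl: "bounded_linear P" using P by (simp add: cblinear_def)
  have "\<forall>t\<in>{0..onorm P}. \<bar>poly (p - q) t\<bar> \<le> 2 * e"
  proof
    fix t assume "t \<in> {0..onorm P}"
    then have "dist (poly p t) (f t) < e" "dist (poly q t) (f t) < e" using p q by auto
    then show "\<bar>poly (p - q) t\<bar> \<le> 2 * e" by (simp add: dist_real_def)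
  qed
  then have "onorm (poly_op (p - q) P) \<le> 2 * e" by (rule onorm_poly_op_le[OF P])
  moreover have "poly_op (p - q) P = (\<lambda>x. poly_op p P x - poly_op q P x)"
    by (rule ext) (rule poly_op_diff[OF bl])
  ultimately show ?thesis by (simp add: op_dist_def)
qed

lemma eventually_op_dist_poly_op_le:
  assumes P: "cblinear P" "positive_form P" and e: "e > 0"
    and p: "poly_approx (onorm P) p f" and q: "poly_approx (onorm P) q f"
  shows "\<exists>N. \<forall>m\<ge>N. \<forall>n\<ge>N. op_dist (poly_op (p m) P) (poly_op (q n) P) < e"
proof -
  have "\<forall>\<^sub>F n in sequentially. (\<forall>t\<in>{0..onorm P}. dist (poly (p n) t) (f t) < e / 4) \<and>
                               (\<forall>t\<in>{0..onorm P}. dist (poly (q n) t) (f t) < e / 4)"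
    using e by (intro eventually_conj uniform_limitD[OF p] uniform_limitD[OF q]) auto
  then obtain N where N: "\<And>n. n \<ge> N \<Longrightarrow> (\<forall>t\<in>{0..onorm P}. dist (poly (p n) t) (f t) < e / 4) \<and>
                               (\<forall>t\<in>{0..onorm P}. dist (poly (q n) t) (f t) < e / 4)"
    by (auto simp: eventually_sequentially)
  have "op_dist (poly_op (p m) P) (poly_op (q n) P) \<le> 2 * (e / 4)" if "m \<ge> N" "n \<ge> N" for m n
    using N that by (intro op_dist_poly_op_le[OF P]) auto
  then show ?thesis using e by (intro exI[of _ N]) force
qed

lemma poly_op_limit_exists:
  assumes P: "cblinear P" "positive_form P" and p: "poly_approx (onorm P) p f"
  obtains X where "cblinear X" "(\<lambda>n. op_dist (poly_op (p n) P) X) \<longlonglongrightarrow> 0"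
proof -
  have blp: "bounded_linear (poly_op q P)" for q
    using P(1) by (simp add: cblinear_def bounded_linear_poly_op)
  obtain X where X: "bounded_linear X" and lim: "(\<lambda>n. op_dist (poly_op (p n) P) X) \<longlonglongrightarrow> 0"
    by (rule op_dist_Cauchy_convergent[OF blp eventually_op_dist_poly_op_le[OF P _ p p]])
  have "X (hscale c x) = hscale c (X x)" for c x
  proof (rule LIMSEQ_unique)
    show "(\<lambda>n. poly_op (p n) P (hscale c x)) \<longlonglongrightarrow> X (hscale c x)"
      by (rule tendsto_apply_if_op_dist[OF blp X lim])
    show "(\<lambda>n. poly_op (p n) P (hscale c x)) \<longlonglongrightarrow> hscale c (X x)"
      using cblinear_poly_op[OF P(1)] tendsto_hscale[OF tendsto_apply_if_op_dist[OF blp X lim]]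
      by (simp add: cblinear_def)
  qed
  then have "cblinear X" using X by (simp add: cblinear_def)
  then show thesis using lim by (rule that)
qed

lemma poly_op_limit_independent:
  assumes P: "cblinear P" "positive_form P" and X: "bounded_linear X"
    and p: "poly_approx (onorm P) p f" and q: "poly_approx (onorm P) q f"
    and lim: "(\<lambda>n. op_dist (poly_op (q n) P) X) \<longlonglongrightarrow> 0"
  shows "(\<lambda>n. op_dist (poly_op (p n) P) X) \<longlonglongrightarrow> 0"
proof -
  have blp: "bounded_linear (poly_op r P)" for r
    using P(1) by (simp add: cblinear_def bounded_linear_poly_op)
  have "(\<lambda>n. op_dist (poly_op (p n) P) (poly_op (q n) P)) \<longlonglongrightarrow> 0"
  proof (rule LIMSEQ_I)
    fix e :: real assume "e > 0"
    then obtain N where "\<forall>n\<ge>N. op_dist (poly_op (p n) P) (poly_op (q n) P) < e"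
      using eventually_op_dist_poly_op_le[OF P _ p q] by blast
    then show "\<exists>N. \<forall>n\<ge>N. norm (op_dist (poly_op (p n) P) (poly_op (q n) P) - 0) < e"
      using op_dist_nonneg[OF blp blp] by auto
  qed
  from tendsto_add[OF this lim]
  have "(\<lambda>n. op_dist (poly_op (p n) P) (poly_op (q n) P) + op_dist (poly_op (q n) P) X) \<longlonglongrightarrow> 0"
    by simp
  then show ?thesis
    by (rule Lim_null_comparison[rotated])
      (use op_dist_nonneg[OF blp X] op_dist_triangle[OF blp blp X] in simp)
qed

lemma fcalc_characterization:
  assumes P: "cblinear P" "positive_form P" and f: "continuous_on {0..onorm P} f"
  shows "cblinear (fcalc f P) \<and>
    (\<forall>p. poly_approx (onorm P) p f \<longrightarrow> (\<lambda>n. op_dist (poly_op (p n) P) (fcalc f P)) \<longlonglongrightarrow> 0)"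
proof -
  define Q where "Q X \<longleftrightarrow> cblinear X \<and>
    (\<forall>p. poly_approx (onorm P) p f \<longrightarrow> (\<lambda>n. op_dist (poly_op (p n) P) X) \<longlonglongrightarrow> 0)" for X
  obtain p0 where p0: "poly_approx (onorm P) p0 f" using poly_approx_exists[OF f] by blast
  obtain X where X: "cblinear X" and lim: "(\<lambda>n. op_dist (poly_op (p0 n) P) X) \<longlonglongrightarrow> 0"
    using poly_op_limit_exists[OF P p0] .
  have "Q X"
    using X poly_op_limit_independent[OF P _ _ p0 lim] by (simp add: Q_def cblinear_def)
  moreover have "Y = X" if "Q Y" for Y
    using that X lim p0 P
    by (intro op_dist_limit_unique[of "\<lambda>n. poly_op (p0 n) P"])
      (auto simp: Q_def cblinear_def intro: bounded_linear_poly_op)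
  ultimately have "Q (THE X. Q X)" by (rule theI)
  then show ?thesis by (simp add: Q_def fcalc_def op_dist_def)
qed

lemma hinner_poly_op_lower_bound:
  assumes P: "cblinear P" "positive_form P" and p: "\<forall>t\<in>{0..onorm P}. poly p t > - d"
  shows "- (d * (norm x)\<^sup>2) \<le> Re (hinner (poly_op p P x) x)"
proof -
  have "\<forall>t\<in>{0..onorm P}. poly (p + [:d:]) t > 0" using p by auto
  then have "Re (hinner (poly_op (p + [:d:]) P x) x) \<ge> 0"
    using positive_form_poly_op[OF P] by (simp add: positive_form_def)
  then show ?thesis
    using P(1) by (simp add: cblinear_def poly_op_add poly_op_const hinner_add_left
        hinner_scaleR_left hinner_self)
qed

context
  fixes P :: "'a::complex_hilbert \<Rightarrow> 'a" and f :: "real \<Rightarrow> real"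
  assumes P: "cblinear P" "positive_form P" and f: "continuous_on {0..onorm P} f"
begin

lemma cblinear_fcalc: "cblinear (fcalc f P)"
  using fcalc_characterization[OF P f] by simp

lemma bounded_linear_fcalc: "bounded_linear (fcalc f P)"
  using cblinear_fcalc by (simp add: cblinear_def)

lemma tendsto_poly_op_fcalc:
  assumes "poly_approx (onorm P) p f"
  shows "(\<lambda>n. poly_op (p n) P x) \<longlonglongrightarrow> fcalc f P x"
  using P(1) fcalc_characterization[OF P f] assms
  by (intro tendsto_apply_if_op_dist[OF bounded_linear_poly_op bounded_linear_fcalc])
    (auto simp: cblinear_def)

lemma hermitian_fcalc: "hermitian (fcalc f P)"
  unfolding hermitian_def
proof (intro allI)
  fix x y
  obtain p where p: "poly_approx (onorm P) p f" using poly_approx_exists[OF f] by blast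
  have "hermitian (poly_op q P)" for q
    using hermitian_poly_op[OF _ hermitian_if_positive_form[OF P]] P(1) by (simp add: cblinear_def)
  then have "(\<lambda>n. hinner (poly_op (p n) P x) y) \<longlonglongrightarrow> hinner x (fcalc f P y)"
    by (simp add: hermitian_def tendsto_hinner_right tendsto_poly_op_fcalc p)
  moreover have "(\<lambda>n. hinner (poly_op (p n) P x) y) \<longlonglongrightarrow> hinner (fcalc f P x) y"
    by (intro tendsto_hinner_left tendsto_poly_op_fcalc p)
  ultimately show "hinner (fcalc f P x) y = hinner x (fcalc f P y)"
    by (intro LIMSEQ_unique[of "\<lambda>n. hinner (poly_op (p n) P x) y"])
qed

lemma positive_form_fcalc:
  assumes f_nonneg: "\<forall>t\<in>{0..onorm P}. f t \<ge> 0"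
  shows "positive_form (fcalc f P)"
  unfolding positive_form_def
proof (intro allI conjI)
  fix x
  let ?X = "fcalc f P"
  have "hinner (?X x) x = hinner x (?X x)"
    using hermitian_fcalc by (simp add: hermitian_def)
  then have "hinner (?X x) x = cnj (hinner (?X x) x)"
    using hinner_cnj[of x] by simp
  then show "Im (hinner (?X x) x) = 0" by (simp add: complex_eq_iff)
  obtain p where p: "poly_approx (onorm P) p f" using poly_approx_exists[OF f] by blast
  have lim: "(\<lambda>n. Re (hinner (poly_op (p n) P x) x)) \<longlonglongrightarrow> Re (hinner (?X x) x)"
    by (intro tendsto_Re tendsto_hinner_left tendsto_poly_op_fcalc p)
  show "Re (hinner (?X x) x) \<ge> 0"
  proof (rule field_le_epsilon)
    fix e :: real assume e: "e > 0"
    define d where "d = e / ((norm x)\<^sup>2 + 1)"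
    have d: "d > 0" using e by (simp add: d_def add_nonneg_pos)
    have "\<forall>\<^sub>F n in sequentially. \<forall>t\<in>{0..onorm P}. dist (poly (p n) t) (f t) < d"
      by (rule uniform_limitD[OF p d])
    then have "\<forall>\<^sub>F n in sequentially. - (d * (norm x)\<^sup>2) \<le> Re (hinner (poly_op (p n) P x) x)"
    proof (rule eventually_mono)
      fix n assume n: "\<forall>t\<in>{0..onorm P}. dist (poly (p n) t) (f t) < d"
      have "\<forall>t\<in>{0..onorm P}. poly (p n) t > - d"
      proof
        fix t assume "t \<in> {0..onorm P}"
        then have "\<bar>poly (p n) t - f t\<bar> < d" "f t \<ge> 0"
          using n f_nonneg by (auto simp: dist_real_def)
        then show "poly (p n) t > - d" by linarith
      qed
      then show "- (d * (norm x)\<^sup>2) \<le> Re (hinner (poly_op (p n) P x) x)"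
        by (rule hinner_poly_op_lower_bound[OF P])
    qed
    then have "- (d * (norm x)\<^sup>2) \<le> Re (hinner (?X x) x)"
      by (rule tendsto_le[OF sequentially_bot lim tendsto_const])
    moreover have "d * (norm x)\<^sup>2 = e * ((norm x)\<^sup>2 / ((norm x)\<^sup>2 + 1))"
      by (simp add: d_def)
    moreover have "\<dots> \<le> e * 1"
      using e by (intro mult_left_mono) (auto simp: divide_le_eq_1 add_nonneg_pos)
    ultimately show "0 \<le> Re (hinner (?X x) x) + e" by simp
  qed
qed

lemma fcalc_commute:
  assumes R: "bounded_linear R" and RP: "\<And>x. R (P x) = P (R x)"
  shows "R (fcalc f P x) = fcalc f P (R x)"
proof -
  have bl: "bounded_linear P" using P(1) by (simp add: cblinear_def)
  obtain p where p: "poly_approx (onorm P) p f" using poly_approx_exists[OF f] by blast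
  have "(\<lambda>n. R (poly_op (p n) P x)) \<longlonglongrightarrow> R (fcalc f P x)"
    by (rule bounded_linear.tendsto[OF R tendsto_poly_op_fcalc[OF p]])
  moreover have "(\<lambda>n. R (poly_op (p n) P x)) \<longlonglongrightarrow> fcalc f P (R x)"
    unfolding poly_op_commute[OF bl R RP]
    by (rule tendsto_poly_op_fcalc[OF p])
  ultimately show ?thesis by (rule LIMSEQ_unique)
qed

end

lemma fcalc_id:
  assumes P: "cblinear P" "positive_form P"
  shows "fcalc (\<lambda>t. t) P x = P x"
proof -
  have "poly_approx (onorm P) (\<lambda>n. [:0, 1:]) (\<lambda>t. t)"
    by (simp add: uniform_limit_iff)
  then have "(\<lambda>n. poly_op [:0, 1:] P x) \<longlonglongrightarrow> fcalc (\<lambda>t. t) P x"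
    by (rule tendsto_poly_op_fcalc[OF P continuous_on_id])
  then show ?thesis using P(1) by (simp add: poly_op_X cblinear_def LIMSEQ_const_iff)
qed

lemma fcalc_sqrt_squared:
  assumes P: "cblinear P" "positive_form P"
  shows "fcalc sqrt P (fcalc sqrt P x) = P x"
proof -
  have bl: "bounded_linear P" using P by (simp add: cblinear_def)
  have c: "continuous_on {0..onorm P} sqrt" by (intro continuous_intros)
  obtain p where p: "poly_approx (onorm P) p sqrt" using poly_approx_exists[OF c] by blast
  have "bounded (sqrt ` {0..onorm P})"
    by (intro compact_imp_bounded compact_continuous_image c compact_Icc)
  then have "poly_approx (onorm P) (\<lambda>n. p n * p n) (\<lambda>t. sqrt t * sqrt t)"
    using uniform_lim_mult[OF p p] by simp
  then have "uniform_limit {0..onorm P} (\<lambda>n t. poly (p n) t * poly (p n) t) (\<lambda>t. t) sequentially"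
    by (rule iffD1[OF uniform_limit_cong', rotated 2]) auto
  then have "poly_approx (onorm P) (\<lambda>n. p n * p n) (\<lambda>t. t)"
    by (simp only: poly_mult)
  then have "(\<lambda>n. poly_op (p n * p n) P x) \<longlonglongrightarrow> fcalc (\<lambda>t. t) P x"
    by (rule tendsto_poly_op_fcalc[OF P continuous_on_id])
  then have "(\<lambda>n. poly_op (p n * p n) P x) \<longlonglongrightarrow> P x"
    by (simp only: fcalc_id[OF P])
  moreover have "(\<lambda>n. poly_op (p n) P (poly_op (p n) P x)) \<longlonglongrightarrow> fcalc sqrt P (fcalc sqrt P x)"
    using fcalc_characterization[OF P c] p
    by (intro tendsto_apply_twice_if_op_dist[OF bounded_linear_poly_op[OF bl] bounded_linear_fcalc[OF P c]])
      auto
  then have "(\<lambda>n. poly_op (p n * p n) P x) \<longlonglongrightarrow> fcalc sqrt P (fcalc sqrt P x)"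
    by (simp add: poly_op_mult[OF bl])
  ultimately show ?thesis using LIMSEQ_unique[of "\<lambda>n. poly_op (p n * p n) P x"] by blast
qed

section \<open>The Riesz representation theorem and the adjoint\<close>

lemma parallelogram_law:
  fixes u v :: "'a::complex_hilbert"
  shows "(norm (u + v))\<^sup>2 + (norm (u - v))\<^sup>2 = 2 * (norm u)\<^sup>2 + 2 * (norm v)\<^sup>2"
proof -
  have "complex_of_real ((norm (u + v))\<^sup>2 + (norm (u - v))\<^sup>2)
      = hinner (u + v) (u + v) + hinner (u - v) (u - v)"
    by (simp add: hinner_self)
  also have "\<dots> = 2 * hinner u u + 2 * hinner v v"
    by (simp add: hinner_add_left hinner_add_right hinner_diff_left hinner_diff_right)
  also have "\<dots> = complex_of_real (2 * (norm u)\<^sup>2 + 2 * (norm v)\<^sup>2)"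
    by (simp add: hinner_self)
  finally show ?thesis using of_real_eq_iff by blast
qed

lemma norm_sq_diff_le_midpoint:
  fixes x a b :: "'a::complex_hilbert"
  assumes "d \<le> (norm (x - (1/2) *\<^sub>R (a + b)))\<^sup>2"
  shows "(norm (a - b))\<^sup>2 \<le> 2 * (norm (x - a))\<^sup>2 + 2 * (norm (x - b))\<^sup>2 - 4 * d"
proof -
  have "(x - a) + (x - b) = 2 *\<^sub>R (x - (1/2) *\<^sub>R (a + b))" by (simp add: algebra_simps scaleR_2)
  then have "(norm ((x - a) + (x - b)))\<^sup>2 \<ge> 4 * d"
    using assms by (simp add: power_mult_distrib)
  moreover have "(x - a) - (x - b) = b - a" by simp
  ultimately show ?thesis
    using parallelogram_law[of "x - a" "x - b"] by (simp add: norm_minus_commute)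
qed

lemma nearest_point_exists:
  fixes x :: "'a::complex_hilbert"
  assumes N: "closed N" "convex N" "N \<noteq> {}"
  obtains n where "n \<in> N" "\<And>m. m \<in> N \<Longrightarrow> norm (x - n) \<le> norm (x - m)"
proof -
  define d where "d = (INF m\<in>N. (norm (x - m))\<^sup>2)"
  have bdd: "bdd_below ((\<lambda>m. (norm (x - m))\<^sup>2) ` N)" by (intro bdd_belowI2[of _ 0]) simp
  have d_le: "d \<le> (norm (x - m))\<^sup>2" if "m \<in> N" for m
    unfolding d_def by (rule cINF_lower[OF bdd that])
  have "\<exists>m\<in>N. (norm (x - m))\<^sup>2 < d + inverse (real (Suc k))" for k
    unfolding d_def by (subst cINF_less_iff[OF N(3) bdd, symmetric]) simp
  then obtain nk where nk: "\<And>k. nk k \<in> N" "\<And>k. (norm (x - nk k))\<^sup>2 < d + inverse (real (Suc k))"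
    using bchoice[of UNIV "\<lambda>k m. m \<in> N \<and> (norm (x - m))\<^sup>2 < d + inverse (real (Suc k))"] by blast
  have mid: "(1/2) *\<^sub>R (nk k + nk l) \<in> N" for k l
    using convexD[OF N(2) nk(1)[of k] nk(1)[of l], of "1/2" "1/2"] by (simp add: scaleR_add_right)
  have close: "(norm (nk k - nk l))\<^sup>2 \<le> 2 * inverse (real (Suc k)) + 2 * inverse (real (Suc l))" for k l
    using norm_sq_diff_le_midpoint[OF d_le[OF mid[of k l]]] nk(2)[of k] nk(2)[of l] by linarith
  have "Cauchy nk"
  proof (rule metric_CauchyI)
    fix e :: real assume e: "e > 0"
    obtain M :: nat where M: "inverse (real (Suc M)) < e\<^sup>2 / 4"
      using e by (metis divide_pos_pos reals_Archimedean zero_less_numeral zero_less_power)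
    have "dist (nk m) (nk n) < e" if "m \<ge> M" "n \<ge> M" for m n
    proof -
      have "inverse (real (Suc m)) \<le> inverse (real (Suc M))" "inverse (real (Suc n)) \<le> inverse (real (Suc M))"
        using that by (simp_all add: le_imp_inverse_le)
      then have "(dist (nk m) (nk n))\<^sup>2 < e\<^sup>2"
        using close[of m n] M unfolding dist_norm by linarith
      then show ?thesis using e by (simp add: power_less_imp_less_base)
    qed
    then show "\<exists>M. \<forall>m\<ge>M. \<forall>n\<ge>M. dist (nk m) (nk n) < e" by blast
  qed
  then obtain n where n: "nk \<longlonglongrightarrow> n" using Cauchy_convergent_iff convergent_def by blast
  have "n \<in> N" using closed_sequentially[OF N(1) _ n] nk(1) by blast
  moreover have "(norm (x - n))\<^sup>2 \<le> d + 0"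
  proof (rule tendsto_le[OF sequentially_bot])
    show "(\<lambda>k. (norm (x - nk k))\<^sup>2) \<longlonglongrightarrow> (norm (x - n))\<^sup>2" by (intro tendsto_intros n)
    show "(\<lambda>k. d + inverse (real (Suc k))) \<longlonglongrightarrow> d + 0"
      by (intro tendsto_intros LIMSEQ_inverse_real_of_nat)
    show "\<forall>\<^sub>F k in sequentially. (norm (x - nk k))\<^sup>2 \<le> d + inverse (real (Suc k))"
      using nk(2) by (simp add: less_imp_le)
  qed
  then have "norm (x - n) \<le> norm (x - m)" if "m \<in> N" for m
    using d_le[OF that] by (simp add: power2_le_imp_le[OF order_trans])
  ultimately show thesis by (rule that)
qed

lemma hinner_eq_0_if_nearest:
  assumes w: "\<And>c. hscale c w \<in> N" and min: "\<And>v. v \<in> N \<Longrightarrow> norm y \<le> norm (y - v)"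
  shows "hinner w y = 0"
proof -
  define a where "a = hinner y w"
  define t where "t = 1 / ((norm w)\<^sup>2 + 1)"
  have t: "t > 0" "t * (norm w)\<^sup>2 \<le> 1" by (simp_all add: t_def add_nonneg_pos divide_le_eq_1)
  define v where "v = hscale (of_real t * a) w"
  \<comment> \<open>moving from \<open>y\<close> towards \<open>v\<close> decreases \<open>\<parallel>y\<parallel>\<close> to first order unless \<open>a = 0\<close>\<close>
  have "hinner y v = of_real t * (a * cnj a)"
    by (simp add: v_def hinner_scale_right a_def[symmetric] mult_ac)
  then have yv: "hinner y v = of_real (t * (cmod a)\<^sup>2)"
    by (simp add: complex_norm_square[symmetric])
  then have vy: "hinner v y = of_real (t * (cmod a)\<^sup>2)"
    using hinner_cnj[of v y] by simp
  have nv: "norm v = t * cmod a * norm w" using t by (simp add: v_def norm_hscale norm_mult)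
  have vv: "hinner v v = of_real (t\<^sup>2 * (cmod a)\<^sup>2 * (norm w)\<^sup>2)"
    unfolding hinner_self nv by (simp add: power_mult_distrib)
  have "(norm (y - v))\<^sup>2 = (norm y)\<^sup>2 - 2 * t * (cmod a)\<^sup>2 + t\<^sup>2 * (cmod a)\<^sup>2 * (norm w)\<^sup>2"
  proof -
    have "complex_of_real ((norm (y - v))\<^sup>2) = hinner y y - hinner y v - hinner v y + hinner v v"
      unfolding hinner_self[symmetric] by (simp add: hinner_diff_left hinner_diff_right)
    also have "\<dots> = complex_of_real ((norm y)\<^sup>2 - 2 * t * (cmod a)\<^sup>2 + t\<^sup>2 * (cmod a)\<^sup>2 * (norm w)\<^sup>2)"
      by (simp add: yv vy vv hinner_self[of y])
    finally show ?thesis using of_real_eq_iff by blast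
  qed
  moreover have "(norm y)\<^sup>2 \<le> (norm (y - v))\<^sup>2"
    using min[of v] w by (intro power_mono) (auto simp: v_def)
  ultimately have "2 * t * (cmod a)\<^sup>2 \<le> t * (cmod a)\<^sup>2 * (t * (norm w)\<^sup>2)"
    by (simp add: power2_eq_square mult_ac)
  also have "\<dots> \<le> t * (cmod a)\<^sup>2" using t mult_left_mono[OF t(2), of "t * (cmod a)\<^sup>2"] by simp
  finally have "(cmod a)\<^sup>2 \<le> 0" using t by simp
  then have "a = 0" by simp
  then show ?thesis using hinner_cnj[of w y] by (simp add: a_def)
qed

lemma riesz_representation:
  fixes \<phi> :: "'a::complex_hilbert \<Rightarrow> complex"
  assumes add: "\<And>x y. \<phi> (x + y) = \<phi> x + \<phi> y"
    and scale: "\<And>c x. \<phi> (hscale c x) = c * \<phi> x"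
    and bound: "\<And>x. cmod (\<phi> x) \<le> K * norm x"
  obtains z where "\<And>x. \<phi> x = hinner x z"
proof (cases "\<forall>x. \<phi> x = 0")
  case True then show thesis using that[of 0] by simp
next
  case False
  then obtain x0 where x0: "\<phi> x0 \<noteq> 0" by blast
  have bl: "bounded_linear \<phi>"
  proof (rule bounded_linear_intro[where K = K])
    show "\<phi> (r *\<^sub>R x) = r *\<^sub>R \<phi> x" for r x
      using scale[of "of_real r" x] by (simp add: hscale_of_real scaleR_conv_of_real)
    show "norm (\<phi> x) \<le> norm x * K" for x using bound[of x] by (simp add: mult.commute)
  qed (rule add)
  define N where "N = {x. \<phi> x = 0}"
  have "closed N"
    unfolding N_def by (intro closed_Collect_eq linear_continuous_on bl continuous_on_const)
  moreover have "convex N"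
    by (auto simp: N_def convex_def linear_simps[OF bl])
  moreover have "0 \<in> N" by (simp add: N_def linear_simps[OF bl])
  ultimately obtain n where n: "n \<in> N" "\<And>m. m \<in> N \<Longrightarrow> norm (x0 - n) \<le> norm (x0 - m)"
    using nearest_point_exists by blast
  define y where "y = x0 - n"
  have phi_y: "\<phi> y = \<phi> x0" using n(1) by (simp add: y_def N_def linear_simps[OF bl])
  have orth: "hinner w y = 0" if "w \<in> N" for w
  proof (rule hinner_eq_0_if_nearest)
    show "hscale c w \<in> N" for c using that by (simp add: N_def scale)
    show "norm y \<le> norm (y - v)" if "v \<in> N" for v
      using n(2)[of "n + v"] n(1) that by (simp add: y_def N_def add algebra_simps)
  qed
  have ny: "(norm y)\<^sup>2 > 0" using phi_y x0 by (auto simp: linear_simps[OF bl])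
  show thesis
  proof (rule that)
    fix x
    define c where "c = \<phi> x / \<phi> y"
    have "x - hscale c y \<in> N" using x0 phi_y by (simp add: N_def linear_simps[OF bl] scale c_def)
    then have "hinner (x - hscale c y) y = 0" by (rule orth)
    then have "hinner x y = c * of_real ((norm y)\<^sup>2)"
      by (simp add: hinner_diff_left hinner_scale_left hinner_self)
    then show "\<phi> x = hinner x (hscale (cnj (\<phi> y) / of_real ((norm y)\<^sup>2)) y)"
      using ny x0 phi_y by (simp add: hinner_scale_right c_def field_simps)
  qed
qed

lemma adjoint_exists:
  assumes A: "cblinear A"
  shows "\<exists>B. \<forall>x y. hinner (A x) y = hinner x (B y)"
proof -
  have bl: "bounded_linear A" using A by (simp add: cblinear_def)
  have "\<exists>z. \<forall>x. hinner (A x) y = hinner x z" for y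
  proof (rule riesz_representation[where K = "onorm A * norm y"])
    fix x x' :: 'a and c
    show "hinner (A (x + x')) y = hinner (A x) y + hinner (A x') y"
      using bl by (simp add: linear_simps hinner_add_left)
    show "hinner (A (hscale c x)) y = c * hinner (A x) y"
      using A by (simp add: cblinear_def hinner_scale_left)
    have "cmod (hinner (A x) y) \<le> norm (A x) * norm y" by (rule cauchy_schwarz)
    also have "\<dots> \<le> onorm A * norm x * norm y" by (intro mult_right_mono onorm[OF bl]) simp
    finally show "cmod (hinner (A x) y) \<le> onorm A * norm y * norm x" by (simp add: mult_ac)
  qed blast
  then show ?thesis by metis
qed

lemma hinner_adjoint:
  assumes A: "cblinear A"
  shows "hinner (A x) y = hinner x (adjoint A y)"
proof -
  obtain B where B: "\<forall>x y. hinner (A x) y = hinner x (B y)" using adjoint_exists[OF A] by blast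
  have "B' = B" if "\<forall>x y. hinner (A x) y = hinner x (B' y)" for B'
    using that B by (intro ext hinner_eqI) auto
  then have "adjoint A = B" unfolding adjoint_def using B by (intro the_equality) auto
  then show ?thesis using B by simp
qed

lemma cblinear_adjoint:
  assumes A: "cblinear A"
  shows "cblinear (adjoint A)"
proof -
  have bl: "bounded_linear A" using A by (simp add: cblinear_def)
  let ?B = "adjoint A"
  have add: "?B (y + y') = ?B y + ?B y'" for y y'
    by (rule hinner_eqI) (simp add: hinner_adjoint[OF A, symmetric] hinner_add_right)
  have scale: "?B (hscale c y) = hscale c (?B y)" for c y
    by (rule hinner_eqI) (simp add: hinner_adjoint[OF A, symmetric] hinner_scale_right)
  have bound: "norm (?B y) \<le> norm y * onorm A" for y
  proof -
    have "(norm (?B y))\<^sup>2 = Re (hinner (A (?B y)) y)"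
      by (simp add: norm_sq_eq_hinner hinner_adjoint[OF A])
    also have "\<dots> \<le> norm (A (?B y)) * norm y"
      using complex_Re_le_cmod cauchy_schwarz order_trans by blast
    also have "\<dots> \<le> onorm A * norm (?B y) * norm y" by (intro mult_right_mono onorm[OF bl]) simp
    finally have "norm (?B y) * norm (?B y) \<le> norm (?B y) * (norm y * onorm A)"
      by (simp add: power2_eq_square mult_ac)
    then show ?thesis
      by (cases "norm (?B y) = 0") (auto simp: onorm_pos_le[OF bl])
  qed
  have "bounded_linear ?B"
    by (rule bounded_linear_intro[OF add _ bound]) (simp add: scale flip: hscale_of_real)
  then show ?thesis using scale by (simp add: cblinear_def)
qed

lemma positive_op_adjoint_comp:
  assumes A: "cblinear A"
  shows "cblinear (\<lambda>x. adjoint A (A x))" "positive_form (\<lambda>x. adjoint A (A x))"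
proof -
  show "cblinear (\<lambda>x. adjoint A (A x))"
    using A cblinear_adjoint[OF A] unfolding cblinear_def by (auto intro: bounded_linear_compose)
  have "hinner (adjoint A (A x)) x = cnj (hinner (A x) (A x))" for x
    by (metis hinner_adjoint[OF A] hinner_cnj)
  then show "positive_form (\<lambda>x. adjoint A (A x))"
    by (simp add: positive_form_def hinner_self)
qed

section \<open>The absolute value of an operator\<close>

lemma positive_sqrt_unique:
  assumes Q: "cblinear Q" "positive_form Q"
    and S: "cblinear S" "positive_form S" and SS: "\<And>x. S (S x) = Q x"
  shows "S = fcalc sqrt Q"
proof
  fix x
  have c: "continuous_on {0..onorm Q} sqrt" by (intro continuous_intros)
  let ?R = "fcalc sqrt Q"
  have R: "cblinear ?R" "positive_form ?R"
    using cblinear_fcalc[OF Q c] positive_form_fcalc[OF Q c] by auto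
  have Sbl: "bounded_linear S" and Rbl: "bounded_linear ?R" using S R by (auto simp: cblinear_def)
  have SR: "S (?R v) = ?R (S v)" for v
    using SS by (intro fcalc_commute[OF Q c Sbl]) metis
  \<comment> \<open>with \<open>D = R - S\<close> and \<open>w = D x\<close>: \<open>\<langle>R w, w\<rangle> + \<langle>S w, w\<rangle> = \<langle>(R\<^sup>2 - S\<^sup>2) x, w\<rangle> = 0\<close>\<close>
  define D where "D v = ?R v - S v" for v
  have hD: "hinner (D u) v = hinner u (D v)" for u v
    using hermitian_if_positive_form[OF R] hermitian_if_positive_form[OF S]
    by (simp add: D_def hermitian_def hinner_diff_left hinner_diff_right)
  define w where "w = D x"
  have "D (?R w) + D (S w) = 0"
    using Sbl Rbl fcalc_sqrt_squared[OF Q] SS SR by (simp add: D_def linear_simps algebra_simps)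
  then have "hinner (?R w) w + hinner (S w) w = 0"
    by (metis hD hinner_add_left hinner_zero_left w_def)
  moreover have "Re (hinner (?R w) w) \<ge> 0" "Re (hinner (S w) w) \<ge> 0"
    using R(2) S(2) by (auto simp: positive_form_def)
  ultimately have "Re (hinner (?R w) w) = 0" "Re (hinner (S w) w) = 0"
    by (metis add_nonneg_eq_0_iff plus_complex.sel(1) zero_complex.sel(1))+
  then have "?R w = 0" "S w = 0" using positive_form_kernel R S by blast+
  then have "D w = 0" by (simp add: D_def)
  then have "hinner w w = 0" using hD[of x w] by (simp add: w_def)
  then show "S x = ?R x" by (simp add: hinner_self_eq_0 w_def D_def)
qed

lemma abs_op_eq_fcalc_sqrt:
  assumes A: "cblinear A"
  shows "abs_op A = fcalc sqrt (\<lambda>x. adjoint A (A x))"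
proof -
  let ?Q = "\<lambda>x. adjoint A (A x)"
  have Q: "cblinear ?Q" "positive_form ?Q" by (rule positive_op_adjoint_comp[OF A])+
  have c: "continuous_on {0..onorm ?Q} sqrt" by (intro continuous_intros)
  let ?R = "fcalc sqrt ?Q"
  have "positive_op ?R \<and> ?R \<circ> ?R = adjoint A \<circ> A"
    using cblinear_fcalc[OF Q c] positive_form_fcalc[OF Q c] fcalc_sqrt_squared[OF Q]
    by (auto simp: positive_op_iff fun_eq_iff)
  moreover have "S = ?R" if "positive_op S \<and> S \<circ> S = adjoint A \<circ> A" for S
    using that by (intro positive_sqrt_unique[OF Q]) (auto simp: positive_op_iff fun_eq_iff)
  ultimately show ?thesis unfolding abs_op_def by (rule the_equality)
qed

lemma abs_op_properties:
  assumes A: "cblinear A"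
  shows "cblinear (abs_op A)" "positive_form (abs_op A)" "onorm (abs_op A) = onorm A"
proof -
  let ?Q = "\<lambda>x. adjoint A (A x)"
  have Q: "cblinear ?Q" "positive_form ?Q" by (rule positive_op_adjoint_comp[OF A])+
  have c: "continuous_on {0..onorm ?Q} sqrt" by (intro continuous_intros)
  show R: "cblinear (abs_op A)" "positive_form (abs_op A)"
    unfolding abs_op_eq_fcalc_sqrt[OF A]
    by (rule cblinear_fcalc[OF Q c], rule positive_form_fcalc[OF Q c]) auto
  \<comment> \<open>\<open>\<parallel>|A| x\<parallel>\<^sup>2 = \<langle>|A|\<^sup>2 x, x\<rangle> = \<langle>A\<^sup>*A x, x\<rangle> = \<parallel>A x\<parallel>\<^sup>2\<close>\<close>
  have "norm (abs_op A x) = norm (A x)" for x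
  proof -
    have "(norm (abs_op A x))\<^sup>2 = Re (hinner x (abs_op A (abs_op A x)))"
      using hermitian_if_positive_form[OF R] by (simp add: norm_sq_eq_hinner hermitian_def)
    also have "abs_op A (abs_op A x) = ?Q x"
      unfolding abs_op_eq_fcalc_sqrt[OF A] by (rule fcalc_sqrt_squared[OF Q])
    also have "Re (hinner x (?Q x)) = (norm (A x))\<^sup>2"
      by (metis hinner_adjoint[OF A] hinner_cnj complex_cnj_cancel_iff norm_sq_eq_hinner cnj.simps(1))
    finally show ?thesis by simp
  qed
  then show "onorm (abs_op A) = onorm A" by (simp add: onorm_def)
qed

section \<open>Approximate eigenvectors\<close>

definition approx_eigenvector :: "('a::complex_hilbert \<Rightarrow> 'a) \<Rightarrow> real \<Rightarrow> (nat \<Rightarrow> 'a) \<Rightarrow> bool" where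
  "approx_eigenvector S \<mu> x \<longleftrightarrow> (\<forall>n. norm (x n) = 1) \<and> (\<lambda>n. S (x n) - \<mu> *\<^sub>R x n) \<longlonglongrightarrow> 0"

lemma exists_norm_eq_1:
  assumes "\<exists>v::'a::real_normed_vector. v \<noteq> 0"
  shows "\<exists>w::'a. norm w = 1"
proof -
  obtain v :: 'a where "v \<noteq> 0" using assms by blast
  then show ?thesis by (intro exI[of _ "sgn v"]) (simp add: norm_sgn)
qed

lemma exists_norm_eq_1_near_onorm:
  fixes P :: "'a::real_normed_vector \<Rightarrow> 'b::real_normed_vector"
  assumes bl: "bounded_linear P" and nontriv: "\<exists>v::'a. v \<noteq> 0" and d: "d > 0"
  shows "\<exists>v. norm v = 1 \<and> norm (P v) \<ge> onorm P - d"
proof (rule ccontr)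
  assume "\<not> ?thesis"
  then have less: "norm (P v) < onorm P - d" if "norm v = 1" for v using that by force
  obtain w :: 'a where "norm w = 1" using exists_norm_eq_1[OF nontriv] by blast
  then have pos: "onorm P - d > 0" using less[of w] by (metis norm_ge_zero order_le_less_trans)
  have "onorm P \<le> onorm P - d"
  proof (rule onorm_bound)
    show "0 \<le> onorm P - d" using pos by simp
    show "norm (P v) \<le> (onorm P - d) * norm v" for v
    proof (cases "v = 0")
      case True then show ?thesis using bl by (simp add: linear_simps)
    next
      case False
      have "P (sgn v) = (1 / norm v) *\<^sub>R P v"
        using bl by (simp add: sgn_div_norm linear_simps divide_inverse)
      then have "norm (P v) / norm v < onorm P - d" using less[of "sgn v"] False by (simp add: norm_sgn)
      then show ?thesis using False by (simp add: divide_less_eq less_imp_le)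
    qed
  qed
  then show False using d by simp
qed

lemma norm_sub_onorm_scaleR_sq_le:
  assumes P: "cblinear P" "positive_form P" and v: "norm v = 1"
  shows "(norm (P v - onorm P *\<^sub>R v))\<^sup>2 \<le> (onorm P)\<^sup>2 - (norm (P v))\<^sup>2"
proof -
  let ?M = "onorm P"
  have "?M \<ge> 0" using P(1) onorm_pos_le by (auto simp: cblinear_def)
  have "hinner v (P v) = cnj (hinner (P v) v)" by (rule hinner_cnj)
  then have "(norm (P v - ?M *\<^sub>R v))\<^sup>2 = (norm (P v))\<^sup>2 - 2 * ?M * Re (hinner (P v) v) + ?M\<^sup>2"
    using v unfolding norm_sq_eq_hinner[of "P v - ?M *\<^sub>R v"] hinner_diff_left hinner_diff_right
      hinner_scaleR_left hinner_scaleR_right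
    by (simp add: hinner_self power2_eq_square algebra_simps)
  also have "\<dots> \<le> ?M\<^sup>2 - (norm (P v))\<^sup>2"
    using norm_apply_sq_le[OF P, of v] \<open>?M \<ge> 0\<close> by simp
  finally show ?thesis .
qed

lemma approx_eigenvector_onorm:
  fixes P :: "'a::complex_hilbert \<Rightarrow> 'a"
  assumes P: "cblinear P" "positive_form P" and nontriv: "\<exists>v::'a. v \<noteq> 0"
  obtains x where "approx_eigenvector P (onorm P) x"
proof -
  have bl: "bounded_linear P" using P by (simp add: cblinear_def)
  define M where "M = onorm P"
  have M0: "M \<ge> 0" using onorm_pos_le[OF bl] by (simp add: M_def)
  have "\<forall>n. \<exists>v::'a. norm v = 1 \<and> norm (P v) \<ge> M - inverse (real (Suc n))"
    using exists_norm_eq_1_near_onorm[OF bl nontriv] by (simp add: M_def)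
  then obtain x where x: "\<And>n. norm (x n) = 1" "\<And>n. norm (P (x n)) \<ge> M - inverse (real (Suc n))"
    by metis
  have bound: "norm (P (x n) - M *\<^sub>R x n) \<le> sqrt (2 * M * inverse (real (Suc n)))" for n
  proof -
    let ?d = "inverse (real (Suc n))"
    have "M\<^sup>2 - (norm (P (x n)))\<^sup>2 \<le> 2 * M * ?d"
    proof (cases "M - ?d \<ge> 0")
      case True
      then have "(M - ?d)\<^sup>2 \<le> (norm (P (x n)))\<^sup>2" using x(2)[of n] by (intro power_mono) auto
      then have "M\<^sup>2 - 2 * M * ?d + ?d\<^sup>2 \<le> (norm (P (x n)))\<^sup>2" by (simp add: power2_diff)
      then show ?thesis using zero_le_power2[of ?d] by linarith
    next
      case False
      then have "M * M \<le> M * ?d" using M0 by (intro mult_left_mono) auto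
      moreover have "M * ?d \<ge> 0" "(norm (P (x n)))\<^sup>2 \<ge> 0" using M0 by simp_all
      ultimately show ?thesis unfolding power2_eq_square by linarith
    qed
    then have "(norm (P (x n) - M *\<^sub>R x n))\<^sup>2 \<le> 2 * M * ?d"
      using norm_sub_onorm_scaleR_sq_le[OF P x(1)[of n]] unfolding M_def by linarith
    then show ?thesis by (simp add: real_le_rsqrt)
  qed
  have "(\<lambda>n. sqrt (2 * M * inverse (real (Suc n)))) \<longlonglongrightarrow> sqrt (2 * M * 0)"
    by (intro tendsto_real_sqrt tendsto_mult tendsto_const LIMSEQ_inverse_real_of_nat)
  then have "(\<lambda>n. sqrt (2 * M * inverse (real (Suc n)))) \<longlonglongrightarrow> 0" by simp
  then have "(\<lambda>n. P (x n) - M *\<^sub>R x n) \<longlonglongrightarrow> 0"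
    by (rule Lim_null_comparison[OF always_eventually, rotated]) (use bound in blast)
  then show thesis using that x(1) by (auto simp: approx_eigenvector_def M_def)
qed

lemma approx_eigenvector_poly_op:
  assumes bl: "bounded_linear P" and x: "approx_eigenvector P \<mu> x"
  shows "(\<lambda>n. poly_op p P (x n) - poly p \<mu> *\<^sub>R x n) \<longlonglongrightarrow> 0"
proof (induction p)
  case 0 then show ?case by simp
next
  case (pCons c p)
  \<comment> \<open>\<open>(c + X p)(P) x - (c + \<mu> p(\<mu>)) x = P (p(P) x - p(\<mu>) x) + p(\<mu>) (P x - \<mu> x)\<close>\<close>
  have "(\<lambda>n. P (poly_op p P (x n) - poly p \<mu> *\<^sub>R x n) + poly p \<mu> *\<^sub>R (P (x n) - \<mu> *\<^sub>R x n))
      \<longlonglongrightarrow> P 0 + poly p \<mu> *\<^sub>R 0"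
    using x unfolding approx_eigenvector_def
    by (intro tendsto_add bounded_linear.tendsto[OF bl pCons.IH] tendsto_scaleR tendsto_const) auto
  moreover have "P (poly_op p P (x n) - poly p \<mu> *\<^sub>R x n) + poly p \<mu> *\<^sub>R (P (x n) - \<mu> *\<^sub>R x n)
      = poly_op (pCons c p) P (x n) - poly (pCons c p) \<mu> *\<^sub>R x n" for n
    using bl by (simp add: poly_op_pCons linear_simps scaleR_diff_right scaleR_add_left)
  ultimately show ?case using bl by (simp add: linear_simps)
qed

lemma approx_eigenvector_fcalc:
  assumes P: "cblinear P" "positive_form P" and f: "continuous_on {0..onorm P} f"
    and \<mu>: "\<mu> \<in> {0..onorm P}" and x: "approx_eigenvector P \<mu> x"
  shows "approx_eigenvector (fcalc f P) (f \<mu>) x"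
  unfolding approx_eigenvector_def
proof (intro conjI LIMSEQ_I)
  show nx: "\<forall>n. norm (x n) = 1" using x by (simp add: approx_eigenvector_def)
  fix r :: real assume r: "r > 0"
  have bl: "bounded_linear P" using P by (simp add: cblinear_def)
  let ?X = "fcalc f P"
  \<comment> \<open>approximate \<open>f\<close> by one polynomial \<open>q\<close> to within \<open>r/3\<close>, both as functions and as operators\<close>
  obtain p where p: "poly_approx (onorm P) p f" using poly_approx_exists[OF f] by blast
  have "\<forall>\<^sub>F n in sequentially. op_dist (poly_op (p n) P) ?X < r / 3
      \<and> (\<forall>t\<in>{0..onorm P}. dist (poly (p n) t) (f t) < r / 3)"
  proof (rule eventually_conj)
    have "(\<lambda>n. op_dist (poly_op (p n) P) ?X) \<longlonglongrightarrow> 0" using fcalc_characterization[OF P f] p by blast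
    then show "\<forall>\<^sub>F n in sequentially. op_dist (poly_op (p n) P) ?X < r / 3"
      using r by (intro order_tendstoD(2)) auto
    show "\<forall>\<^sub>F n in sequentially. \<forall>t\<in>{0..onorm P}. dist (poly (p n) t) (f t) < r / 3"
      using r by (intro uniform_limitD[OF p]) auto
  qed
  then obtain q where q: "op_dist (poly_op q P) ?X < r / 3" "\<forall>t\<in>{0..onorm P}. dist (poly q t) (f t) < r / 3"
    by (auto simp: eventually_sequentially)
  obtain N where N: "\<And>n. n \<ge> N \<Longrightarrow> norm (poly_op q P (x n) - poly q \<mu> *\<^sub>R x n) < r / 3"
    using LIMSEQ_D[OF approx_eigenvector_poly_op[OF bl x], of "r / 3"] r by auto
  have "norm (?X (x n) - f \<mu> *\<^sub>R x n) < r" if "n \<ge> N" for n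
  proof -
    have "?X (x n) - f \<mu> *\<^sub>R x n = (?X (x n) - poly_op q P (x n))
        + (poly_op q P (x n) - poly q \<mu> *\<^sub>R x n) + (poly q \<mu> - f \<mu>) *\<^sub>R x n"
      by (simp add: algebra_simps)
    then have "norm (?X (x n) - f \<mu> *\<^sub>R x n)
        \<le> norm (?X (x n) - poly_op q P (x n)) + norm (poly_op q P (x n) - poly q \<mu> *\<^sub>R x n)
          + norm ((poly q \<mu> - f \<mu>) *\<^sub>R x n)"
      by (simp only:) (rule order_trans[OF norm_triangle_ineq add_right_mono[OF norm_triangle_ineq]])
    moreover have "norm (?X (x n) - poly_op q P (x n)) \<le> op_dist (poly_op q P) ?X"
      using norm_diff_le_op_dist[OF bounded_linear_poly_op[OF bl] bounded_linear_fcalc[OF P f], of q "x n"]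
        nx by (simp add: norm_minus_commute)
    moreover have "norm ((poly q \<mu> - f \<mu>) *\<^sub>R x n) < r / 3"
      using q(2) \<mu> nx by (simp add: dist_real_def)
    ultimately show ?thesis using q(1) N[OF that] by linarith
  qed
  then show "\<exists>N. \<forall>n\<ge>N. norm (?X (x n) - f \<mu> *\<^sub>R x n - 0) < r" by auto
qed

lemma approx_eigenvector_add:
  assumes "approx_eigenvector S \<mu> x" "approx_eigenvector T \<nu> x"
  shows "approx_eigenvector (\<lambda>v. S v + T v) (\<mu> + \<nu>) x"
proof -
  have "(\<lambda>n. (S (x n) - \<mu> *\<^sub>R x n) + (T (x n) - \<nu> *\<^sub>R x n)) \<longlonglongrightarrow> 0 + 0"
    using assms by (intro tendsto_add) (auto simp: approx_eigenvector_def)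
  then show ?thesis using assms by (simp add: approx_eigenvector_def algebra_simps scaleR_add_left)
qed

lemma abs_le_onorm_if_approx_eigenvector:
  assumes bl: "bounded_linear S" and x: "approx_eigenvector S \<mu> x"
  shows "\<bar>\<mu>\<bar> \<le> onorm S"
proof (rule field_le_epsilon)
  fix e :: real assume e: "e > 0"
  have "(\<lambda>n. S (x n) - \<mu> *\<^sub>R x n) \<longlonglongrightarrow> 0" using x by (simp add: approx_eigenvector_def)
  then obtain N where N: "norm (S (x N) - \<mu> *\<^sub>R x N) < e" using e by (auto simp: LIMSEQ_iff)
  have nx: "norm (x N) = 1" using x by (simp add: approx_eigenvector_def)
  have "\<bar>\<mu>\<bar> = norm (\<mu> *\<^sub>R x N)" using nx by simp
  also have "\<dots> \<le> norm (S (x N)) + norm (S (x N) - \<mu> *\<^sub>R x N)"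
    using norm_triangle_ineq[of "S (x N)" "\<mu> *\<^sub>R x N - S (x N)"] by (simp add: norm_minus_commute)
  also have "\<dots> \<le> onorm S + e" using onorm[OF bl, of "x N"] nx N by simp
  finally show "\<bar>\<mu>\<bar> \<le> onorm S + e" .
qed

section \<open>The numerical radius inequality\<close>

lemma continuous_on_mono_convex:
  fixes h :: "real \<Rightarrow> real"
  assumes mono: "mono_on {0..} h" and convex: "convex_on {0..} h"
  shows "continuous_on {0..} h"
proof -
  have interior: "continuous_on {0<..} h"
    by (rule convex_on_continuous[OF open_greaterThan convex_on_subset[OF convex]]) auto
  \<comment> \<open>at \<open>0\<close>, squeeze \<open>h\<close> between \<open>h 0\<close> and the chord from \<open>0\<close> to \<open>1\<close>\<close>
  have small: "\<forall>\<^sub>F t in at 0 within {0..}. t \<in> {0..1::real}"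
    unfolding eventually_at by (rule exI[of _ 1]) (auto simp: dist_real_def)
  have "(h \<longlongrightarrow> h 0) (at 0 within {0..})"
  proof (rule tendsto_sandwich[where f = "\<lambda>_. h 0" and h = "\<lambda>t. (1 - t) * h 0 + t * h 1"])
    show "\<forall>\<^sub>F t in at 0 within {0..}. h 0 \<le> h t"
      using small by eventually_elim (auto intro: monotone_onD[OF mono])
    show "\<forall>\<^sub>F t in at 0 within {0..}. h t \<le> (1 - t) * h 0 + t * h 1"
      using small by eventually_elim (use convex_onD[OF convex, of _ 0 1] in auto)
    show "((\<lambda>t. (1 - t) * h 0 + t * h 1) \<longlongrightarrow> h 0) (at 0 within {0..})"
      by (auto intro!: tendsto_eq_intros)
  qed simp
  moreover have "continuous (at x within {0..}) h" if "x > 0" for x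
    using interior that by (simp add: continuous_on_eq_continuous_at continuous_at_imp_continuous_within)
  ultimately show ?thesis
    by (auto simp: continuous_on_eq_continuous_within continuous_within less_eq_real_def)
qed

lemma mono_convex_le_half_sum_squares:
  fixes h :: "real \<Rightarrow> real"
  assumes mono: "mono_on {0..} h" and convex: "convex_on {0..} h" and "t \<ge> 0" "a * b = t"
  shows "2 * h t \<le> h (a\<^sup>2) + h (b\<^sup>2)"
proof -
  have "t \<le> (1 - 1/2) * a\<^sup>2 + 1/2 * b\<^sup>2"
    using assms(4) sum_squares_bound[of a b] by (simp add: power2_eq_square algebra_simps)
  then have "h t \<le> h ((1 - 1/2) *\<^sub>R a\<^sup>2 + (1/2) *\<^sub>R b\<^sup>2)"
    using assms(3) by (intro monotone_onD[OF mono]) auto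
  also have "\<dots> \<le> (1 - 1/2) * h (a\<^sup>2) + 1/2 * h (b\<^sup>2)"
    by (intro convex_onD[OF convex]) auto
  finally show ?thesis by simp
qed

lemma approx_eigenvector_fcalc_square:
  assumes P: "cblinear P" "positive_form P" and x: "approx_eigenvector P \<mu> x"
    and \<mu>: "\<mu> \<in> {0..onorm P}"
    and k: "continuous_on {0..} k" and h: "continuous_on {0..} h"
  shows "approx_eigenvector (fcalc h (fcalc (\<lambda>t. (k t)\<^sup>2) P)) (h ((k \<mu>)\<^sup>2)) x"
proof -
  have k': "continuous_on {0..onorm P} (\<lambda>t. (k t)\<^sup>2)"
    by (intro continuous_intros continuous_on_subset[OF k]) auto
  let ?Q = "fcalc (\<lambda>t. (k t)\<^sup>2) P"
  have Q: "cblinear ?Q" "positive_form ?Q"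
    using cblinear_fcalc[OF P k'] positive_form_fcalc[OF P k'] by auto
  have Qx: "approx_eigenvector ?Q ((k \<mu>)\<^sup>2) x"
    by (rule approx_eigenvector_fcalc[OF P k' \<mu> x])
  then have "(k \<mu>)\<^sup>2 \<in> {0..onorm ?Q}"
    using abs_le_onorm_if_approx_eigenvector[OF _ Qx] Q(1) by (simp add: cblinear_def)
  moreover have "continuous_on {0..onorm ?Q} h" by (rule continuous_on_subset[OF h]) auto
  ultimately show ?thesis by (intro approx_eigenvector_fcalc[OF Q _ _ Qx])
qed

lemma h_onorm_le_half_onorm_fcalc_sum:
  fixes X :: "'a::complex_hilbert \<Rightarrow> 'a" and f g h :: "real \<Rightarrow> real"
  assumes nontriv: "\<exists>x::'a. x \<noteq> 0" and X: "cblinear X"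
    and f: "continuous_on {0..} f" and g: "continuous_on {0..} g" and fg: "\<forall>t\<ge>0. f t * g t = t"
    and mono: "mono_on {0..} h" and convex: "convex_on {0..} h"
  shows "2 * h (onorm X) \<le> onorm (\<lambda>x. fcalc h (fcalc (\<lambda>t. (f t)\<^sup>2) (abs_op X)) x
                  + fcalc h (fcalc (\<lambda>t. (g t)\<^sup>2) (abs_op X)) x)"
proof -
  let ?P = "abs_op X"
  let ?S = "\<lambda>x. fcalc h (fcalc (\<lambda>t. (f t)\<^sup>2) ?P) x + fcalc h (fcalc (\<lambda>t. (g t)\<^sup>2) ?P) x"
  have P: "cblinear ?P" "positive_form ?P" and norm_P: "onorm ?P = onorm X"
    using abs_op_properties[OF X] by auto
  define M where "M = onorm X"
  have M: "M \<in> {0..onorm ?P}" using onorm_pos_le[of X] X by (simp add: M_def norm_P cblinear_def)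
  obtain x where x: "approx_eigenvector ?P M x"
    using approx_eigenvector_onorm[OF P nontriv] norm_P by (auto simp: M_def)
  have h: "continuous_on {0..} h" by (rule continuous_on_mono_convex[OF mono convex])
  have "approx_eigenvector ?S (h ((f M)\<^sup>2) + h ((g M)\<^sup>2)) x"
    by (intro approx_eigenvector_add approx_eigenvector_fcalc_square[OF P x M] f g h)
  moreover have "bounded_linear ?S"
  proof -
    have "continuous_on {0..onorm ?P} (\<lambda>t. (k t)\<^sup>2)" if "continuous_on {0..} k" for k :: "real \<Rightarrow> real"
      by (intro continuous_intros continuous_on_subset[OF that]) auto
    then have "bounded_linear (fcalc h (fcalc (\<lambda>t. (k t)\<^sup>2) ?P))"
      if "continuous_on {0..} k" for k :: "real \<Rightarrow> real"
      using that by (intro bounded_linear_fcalc cblinear_fcalc[OF P] positive_form_fcalc[OF P]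
          continuous_on_subset[OF h]) auto
    then show ?thesis using f g by (intro bounded_linear_add)
  qed
  ultimately have "h ((f M)\<^sup>2) + h ((g M)\<^sup>2) \<le> onorm ?S"
    using abs_le_onorm_if_approx_eigenvector by fastforce
  moreover have "2 * h M \<le> h ((f M)\<^sup>2) + h ((g M)\<^sup>2)"
    using M fg by (intro mono_convex_le_half_sum_squares[OF mono convex]) auto
  ultimately show ?thesis by (simp add: M_def)
qed

lemma numrad_diag_le_max_onorm:
  fixes A D :: "'a::complex_hilbert \<Rightarrow> 'a"
  assumes nontriv: "\<exists>x::'a. x \<noteq> 0" and A: "cblinear A" and D: "cblinear D"
  shows "0 \<le> numrad (\<lambda>(x, y). (A x, D y))" "numrad (\<lambda>(x, y). (A x, D y)) \<le> max (onorm A) (onorm D)"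
proof -
  let ?T = "\<lambda>(x, y). (A x, D y)"
  have bA: "bounded_linear A" and bD: "bounded_linear D" using A D by (auto simp: cblinear_def)
  have bound: "cmod (hinner (?T z) z) \<le> max (onorm A) (onorm D)" if z: "norm z = 1" for z :: "'a \<times> 'a"
  proof (cases z)
    case (Pair x y)
    have "cmod (hinner (?T z) z) \<le> cmod (hinner (A x) x) + cmod (hinner (D y) y)"
      by (simp add: Pair hinner_prod_def norm_triangle_ineq)
    also have "\<dots> \<le> onorm A * (norm x)\<^sup>2 + onorm D * (norm y)\<^sup>2"
      by (intro add_mono hinner_apply_le_onorm bA bD)
    also have "\<dots> \<le> max (onorm A) (onorm D) * ((norm x)\<^sup>2 + (norm y)\<^sup>2)"
      by (simp add: distrib_left add_mono mult_right_mono)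
    also have "(norm x)\<^sup>2 + (norm y)\<^sup>2 = 1" using z Pair by (simp add: norm_Pair)
    finally show ?thesis by simp
  qed
  obtain w :: 'a where "norm w = 1" using exists_norm_eq_1[OF nontriv] by blast
  then have unit: "(w, 0) \<in> {z. norm z = 1}" by (simp add: norm_Pair)
  then have "{z :: 'a \<times> 'a. norm z = 1} \<noteq> {}" by blast
  then show "numrad ?T \<le> max (onorm A) (onorm D)"
    unfolding numrad_def using bound by (intro cSUP_least) auto
  have "cmod (hinner (?T (w, 0)) (w, 0)) \<le> numrad ?T"
    unfolding numrad_def using unit bound by (intro cSUP_upper bdd_aboveI2) auto
  then show "0 \<le> numrad ?T" by (rule order_trans[OF norm_ge_zero])
qed

theorem theorem3p1:
  fixes A D :: "'a::complex_hilbert \<Rightarrow> 'a"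
    and f g h :: "real \<Rightarrow> real"
  assumes nontriv: "\<exists>x::'a. x \<noteq> 0"
    and A: "cblinear A" and D: "cblinear D"
    and f_cont: "continuous_on {0..} f" and g_cont: "continuous_on {0..} g"
    and f_nonneg: "\<forall>t\<ge>0. f t \<ge> 0" and g_nonneg: "\<forall>t\<ge>0. g t \<ge> 0"
    and fg: "\<forall>t\<ge>0. f t * g t = t"
    and h_nonneg: "\<forall>t\<ge>0. h t \<ge> 0"
    and h_mono: "mono_on {0..} h"
    and h_convex: "convex_on {0..} h"
  shows "h (numrad (\<lambda>(x, y). (A x, D y)))
    \<le> 1/2 * max
        (onorm (\<lambda>x. fcalc h (fcalc (\<lambda>t. (f t)^2) (abs_op A)) x
                  + fcalc h (fcalc (\<lambda>t. (g t)^2) (abs_op A)) x))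
        (onorm (\<lambda>x. fcalc h (fcalc (\<lambda>t. (f t)^2) (abs_op D)) x
                  + fcalc h (fcalc (\<lambda>t. (g t)^2) (abs_op D)) x))"
proof -
  have norms: "onorm A \<ge> 0" "onorm D \<ge> 0" using A D onorm_pos_le by (auto simp: cblinear_def)
  note h_le = monotone_onD[OF h_mono]
  have "h (numrad (\<lambda>(x, y). (A x, D y))) \<le> h (max (onorm A) (onorm D))"
    using numrad_diag_le_max_onorm[OF nontriv A D] norms by (intro h_le) auto
  also have "\<dots> = max (h (onorm A)) (h (onorm D))"
    using norms h_le[of "onorm A" "onorm D"] h_le[of "onorm D" "onorm A"] by (auto simp: max_def)
  also have "\<dots> \<le> 1/2 * max
        (onorm (\<lambda>x. fcalc h (fcalc (\<lambda>t. (f t)^2) (abs_op A)) x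
                  + fcalc h (fcalc (\<lambda>t. (g t)^2) (abs_op A)) x))
        (onorm (\<lambda>x. fcalc h (fcalc (\<lambda>t. (f t)^2) (abs_op D)) x
                  + fcalc h (fcalc (\<lambda>t. (g t)^2) (abs_op D)) x))"
    using h_onorm_le_half_onorm_fcalc_sum[OF nontriv A f_cont g_cont fg h_mono h_convex]
      h_onorm_le_half_onorm_fcalc_sum[OF nontriv D f_cont g_cont fg h_mono h_convex]
    by (simp add: max_def)
  finally show ?thesis .
qed

end
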